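(* Let $T$ be a basic maximal rigid object of $\mathcal{C}_n$ with top summand $T_1=(1,n-1)$, and let $X\in\mathcal{F}$. If both $\sigma^{\mathcal{T}}_X$ and $\sigma^{\mathcal{D}}_X$ are non-zero strings, then there is a $\mathcal{D}$-arrow $\beta_X$ in the quiver of $\Lambda_T$ from the end vertex of $\sigma^{\mathcal{T}}_X$ to the end vertex of $\sigma^{\mathcal{D}}_X$; in particular $(\sigma^{\mathcal{D}}_X)^{-1}\beta_X\sigma^{\mathcal{T}}_X$ is a well-defined string.
   Context: Let $k$ be algebraically closed, $n\ge2$, $\mathcal{T}_n$ the tube of rank $n$ (finite-dimensional nilpotent representations of the cyclically oriented $\tilde A_{n-1}$-quiver; AR-translation $\tau$), $\mathcal{C}_n=D^b(\mathcal{T}_n)/\tau^{-1}[1]$ the cluster tube, with indecomposables identified with those of $\mathcal{T}_n$. Indecomposables have coordinates $(a,b)$, $a\in\mathbb{Z}/n$ (represented in $\{1,\dots,n\}$), $b\ge1$ the quasilength, with $\tau(a,b)=(a-1,b)$ and irreducible maps $(a,b)\to(a,b+1)$, $(a,b)\to(a+1,b-1)$. For indecomposables $X,Y$, $\operatorname{Hom}_{\mathcal{C}_n}(X,Y)=\operatorname{Hom}_{\mathcal{T}_n}(X,Y)\oplus\operatorname{Hom}_{D^b}(X,\tau^{-1}Y[1])$; elements of the first summand are $\mathcal{T}$-maps, of the second $\mathcal{D}$-maps. $R^{\mathcal{T}}(X)$ (resp. $R^{\mathcal{D}}(X)$) is the set of indecomposables with a nonzero $\mathcal{T}$-map (resp.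 $\mathcal{D}$-map) to $X$. $T=\bigoplus_{i=1}^{n-1}T_i$ is basic maximal rigid ($\operatorname{Ext}^1(T,T)=0$ and $\operatorname{Ext}^1(T\oplus Z,T\oplus Z)=0\Rightarrow Z\in\operatorname{add}T$); its unique summand of quasilength $n-1$ (top summand) is, by choice of coordinates, $T_1=(1,n-1)$. $\mathcal{F}$ is the set of indecomposables $(a,b)$, $a\in\{1,\dots,n\}$, with $b\le n-1$ or $a+b\le2n-1$. The quiver of $\Lambda_T=\operatorname{End}_{\mathcal{C}_n}(T)^{\mathrm{op}}$ has a vertex for each $T_i$ and arrows $i\to j$ for maps $T_j\to T_i$ irreducible in $\operatorname{add}T$; the arrow is a $\mathcal{D}$-arrow if that map is a $\mathcal{D}$-map. A string is a trivial string at a vertex, or a word in arrows and formal inverses with matching endpoints, no letter followed by its inverse, and no subword of it or its inverse a zero relation of $\Lambda_T$. For $*\in\{\mathcal{T},\mathcal{D}\}$: if $R^*(X)\cap\operatorname{add}T\neq\emptyset$, $\sigma^*_X$ denotes the unique string that traverses exactly the vertices of the summands of $T$ in $R^*(X)$, each exactly once, and ends at the vertex of the one of highest quasilength; otherwise $\sigma^*_X$ is the zero string. *)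

theory Defs
  imports "HOL-Computational_Algebra.Polynomial" "HOL-Number_Theory.Cong"
begin

text \<open>Indecomposables are pairs (a,b): a in {1..n} the residue, b >= 1 the quasilength.
  Convention: (a,b) is the uniserial module with composition factors S_a (socle),
  S_(a+1), ..., S_(a+b-1) (top), indices mod n.  Then tau (a,b) = (a-1,b), and
  (a,b) -> (a,b+1) (mono), (a,b) -> (a+1,b-1) (epi) are the irreducible maps.\<close>

type_synonym obj = "int \<times> int"

definition valid :: "nat \<Rightarrow> obj \<Rightarrow> bool" where
  "valid n X \<longleftrightarrow> 1 \<le> fst X \<and> fst X \<le> int n \<and> 1 \<le> snd X"

definition rep :: "nat \<Rightarrow> int \<Rightarrow> int" where
  "rep n a = (a - 1) mod int n + 1"

definition tau :: "nat \<Rightarrow> obj \<Rightarrow> obj" where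
  "tau n X = (rep n (fst X - 1), snd X)"

definition tauinv :: "nat \<Rightarrow> obj \<Rightarrow> obj" where
  "tauinv n X = (rep n (fst X + 1), snd X)"

text \<open>Basis of Hom_T(X,Y): the index l is the length of the image; a basis map with image
  length l exists iff the top quotient of X of length l is isomorphic to the bottom
  submodule of Y of length l.\<close>

definition BT :: "nat \<Rightarrow> obj \<Rightarrow> obj \<Rightarrow> int set" where
  "BT n X Y = {l. 1 \<le> l \<and> l \<le> snd X \<and> l \<le> snd Y \<and> [fst X + snd X - l = fst Y] (mod int n)}"

text \<open>Basis of the D-part Hom_D(X, tau^-1 Y[1]).  By Serre duality (S = tau[1]) this space is
  D Hom_T(tau^-2 Y, X); we index it by the dual basis of the basis of Hom_T(tau^-2 Y, X).\<close>

definition BD :: "nat \<Rightarrow> obj \<Rightarrow> obj \<Rightarrow> int set" where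
  "BD n X Y = BT n (tauinv n (tauinv n Y)) X"

text \<open>Morphisms X -> Y in C_n over the field 'k: coefficients w.r.t. the T-basis and the D-basis.\<close>

type_synonym 'k mor = "(int \<Rightarrow> 'k) \<times> (int \<Rightarrow> 'k)"

definition morph :: "('k::field) itself \<Rightarrow> nat \<Rightarrow> obj \<Rightarrow> obj \<Rightarrow> 'k mor set" where
  "morph K n X Y = {f. (\<forall>l. l \<notin> BT n X Y \<longrightarrow> fst f l = 0) \<and> (\<forall>q. q \<notin> BD n X Y \<longrightarrow> snd f q = 0)}"

definition zmor :: "('k::field) mor" where
  "zmor = (\<lambda>_. 0, \<lambda>_. 0)"

definition madd :: "('k::field) mor \<Rightarrow> 'k mor \<Rightarrow> 'k mor" where
  "madd f g = (\<lambda>l. fst f l + fst g l, \<lambda>q. snd f q + snd g q)"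

definition idm :: "obj \<Rightarrow> ('k::field) mor" where
  "idm X = (\<lambda>l. if l = snd X then 1 else 0, \<lambda>_. 0)"

text \<open>T-maps compose as maps of uniserial
  modules (image lengths l, m give image length l+m-len Y if positive, else 0);
  D o T and T o D are given by the module structure of the dual Hom-spaces (Serre duality);
  D o D = 0 (it lands in Hom_D(X, F^2 Z) = 0, the category being hereditary).\<close>

definition comp :: "nat \<Rightarrow> obj \<Rightarrow> obj \<Rightarrow> obj \<Rightarrow> ('k::field) mor \<Rightarrow> 'k mor \<Rightarrow> 'k mor" where
  "comp n X Y Z g f =
     (\<lambda>r. \<Sum>l\<in>BT n X Y. \<Sum>m\<in>BT n Y Z.
            if l + m - snd Y = r \<and> 1 \<le> r then fst f l * fst g m else 0,
      \<lambda>s. (\<Sum>m\<in>BT n X Y. \<Sum>q\<in>BD n Y Z.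
            if s = q - m + snd X \<and> s \<in> BD n X Z then fst f m * snd g q else 0)
        + (\<Sum>q\<in>BD n X Y. \<Sum>m\<in>BT n Y Z.
            if s = q - m + snd Z \<and> s \<in> BD n X Z then snd f q * fst g m else 0))"

definition iso :: "('k::field) itself \<Rightarrow> nat \<Rightarrow> obj \<Rightarrow> obj \<Rightarrow> 'k mor \<Rightarrow> bool" where
  "iso K n X Y f \<longleftrightarrow> f \<in> morph K n X Y \<and>
     (\<exists>g\<in>morph K n Y X. comp n X Y X g f = idm X \<and> comp n Y X Y f g = idm Y)"

definition rad :: "('k::field) itself \<Rightarrow> nat \<Rightarrow> obj \<Rightarrow> obj \<Rightarrow> 'k mor set" where
  "rad K n X Y = {f \<in> morph K n X Y. \<not> iso K n X Y f}"

text \<open>rad^2 of add T (T given by the summands T 1, ..., T (n-1)) between X and Y: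
  the span of composites of two radical maps through a summand of T.\<close>

inductive_set rad2 :: "('k::field) itself \<Rightarrow> nat \<Rightarrow> (nat \<Rightarrow> obj) \<Rightarrow> obj \<Rightarrow> obj \<Rightarrow> 'k mor set"
  for K n T X Y where
  zero: "zmor \<in> rad2 K n T X Y"
| add: "\<lbrakk> m \<in> {1..n-1}; h \<in> rad K n X (T m); g \<in> rad K n (T m) Y; r \<in> rad2 K n T X Y \<rbrakk>
        \<Longrightarrow> madd (comp n X (T m) Y g h) r \<in> rad2 K n T X Y"

definition RT :: "nat \<Rightarrow> obj \<Rightarrow> obj set" where
  "RT n X = {Y. valid n Y \<and> BT n Y X \<noteq> {}}"

definition RD :: "nat \<Rightarrow> obj \<Rightarrow> obj set" where
  "RD n X = {Y. valid n Y \<and> BD n Y X \<noteq> {}}"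

text \<open>Ext^1_C(X,Y) = Hom_C(X, Y[1]) and Y[1] = tau Y in C_n (as tau^-1 [1] = id).\<close>

definition ext1_nz :: "nat \<Rightarrow> obj \<Rightarrow> obj \<Rightarrow> bool" where
  "ext1_nz n X Y \<longleftrightarrow> BT n X (tau n Y) \<noteq> {} \<or> BD n X (tau n Y) \<noteq> {}"

definition rigid :: "nat \<Rightarrow> obj set \<Rightarrow> bool" where
  "rigid n S \<longleftrightarrow> (\<forall>X\<in>S. \<forall>Y\<in>S. \<not> ext1_nz n X Y)"

text \<open>S = set of indecomposable summands of the basic object T.  An object Z of C_n is a finite
  direct sum of indecomposables; Ext^1(T+Z,T+Z) = 0 only depends on the set of summands.\<close>

definition max_rigid :: "nat \<Rightarrow> obj set \<Rightarrow> bool" where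
  "max_rigid n S \<longleftrightarrow> finite S \<and> (\<forall>X\<in>S. valid n X) \<and> rigid n S \<and>
     (\<forall>Z. finite Z \<and> (\<forall>X\<in>Z. valid n X) \<and> rigid n (S \<union> Z) \<longrightarrow> Z \<subseteq> S)"

definition Fset :: "nat \<Rightarrow> obj set" where
  "Fset n = {X. valid n X \<and> (snd X \<le> int n - 1 \<or> fst X + snd X \<le> 2 * int n - 1)}"

datatype kind = TK | DK

text \<open>An arrow (i, j, k, x) : i -> j corresponds to the basis map of Hom_C(T j, T i) of kind k
  (T-map or D-map) with index x, provided it is irreducible in add T, i.e. lies in
  rad \ rad^2.  (Since compositions of basis maps are basis maps or 0, rad^2 is spanned by
  basis maps, so these basis maps give a basis of rad/rad^2, i.e. the arrows.)\<close>

type_synonym arrow = "nat \<times> nat \<times> kind \<times> int"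

definition asrc :: "arrow \<Rightarrow> nat" where "asrc a = fst a"
definition atgt :: "arrow \<Rightarrow> nat" where "atgt a = fst (snd a)"
definition akind :: "arrow \<Rightarrow> kind" where "akind a = fst (snd (snd a))"

definition bmor :: "arrow \<Rightarrow> ('k::field) mor" where
  "bmor a = (case akind a of
      TK \<Rightarrow> (\<lambda>l. if l = snd (snd (snd a)) then 1 else 0, \<lambda>_. 0)
    | DK \<Rightarrow> (\<lambda>_. 0, \<lambda>q. if q = snd (snd (snd a)) then 1 else 0))"

definition is_arrow :: "('k::field) itself \<Rightarrow> nat \<Rightarrow> (nat \<Rightarrow> obj) \<Rightarrow> arrow \<Rightarrow> bool" where
  "is_arrow K n T a \<longleftrightarrow> asrc a \<in> {1..n-1} \<and> atgt a \<in> {1..n-1} \<and>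
     (bmor a :: 'k mor) \<in> rad K n (T (atgt a)) (T (asrc a)) \<and>
     (bmor a :: 'k mor) \<notin> rad2 K n T (T (atgt a)) (T (asrc a))"

text \<open>Map of a path a1 a2 ... am (a_t : v_(t-1) -> v_t): map(a1) o ... o map(am) : T v_m -> T v_0.\<close>

fun pathmor :: "('k::field) itself \<Rightarrow> nat \<Rightarrow> (nat \<Rightarrow> obj) \<Rightarrow> arrow list \<Rightarrow> 'k mor" where
  "pathmor K n T [] = zmor"
| "pathmor K n T [a] = bmor a"
| "pathmor K n T (a # b # r) =
     comp n (T (atgt (last (b # r)))) (T (atgt a)) (T (asrc a)) (bmor a) (pathmor K n T (b # r))"

definition is_path :: "arrow list \<Rightarrow> bool" where
  "is_path p \<longleftrightarrow> (\<forall>t. Suc t < length p \<longrightarrow> atgt (p ! t) = asrc (p ! Suc t))"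

definition zero_rel :: "('k::field) itself \<Rightarrow> nat \<Rightarrow> (nat \<Rightarrow> obj) \<Rightarrow> arrow list \<Rightarrow> bool" where
  "zero_rel K n T p \<longleftrightarrow> 2 \<le> length p \<and> is_path p \<and> (\<forall>a\<in>set p. is_arrow K n T a) \<and>
     pathmor K n T p = (zmor :: 'k mor)"

text \<open>Letters: (arrow, True) = the arrow, (arrow, False) = its formal inverse.  A walk is given
  by a start vertex and a list of letters (read in the order of traversal).\<close>

type_synonym letter = "arrow \<times> bool"

definition lsrc :: "letter \<Rightarrow> nat" where
  "lsrc x = (if snd x then asrc (fst x) else atgt (fst x))"
definition ltgt :: "letter \<Rightarrow> nat" where
  "ltgt x = (if snd x then atgt (fst x) else asrc (fst x))"

definition flip :: "letter \<Rightarrow> letter" where "flip x = (fst x, \<not> snd x)"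

definition inv_letters :: "letter list \<Rightarrow> letter list" where
  "inv_letters ls = rev (map flip ls)"

definition verts :: "nat \<Rightarrow> letter list \<Rightarrow> nat list" where
  "verts v ls = v # map ltgt ls"

definition endv :: "nat \<Rightarrow> letter list \<Rightarrow> nat" where
  "endv v ls = last (verts v ls)"

definition sublists :: "'a list \<Rightarrow> 'a list set" where
  "sublists xs = {take (j - i) (drop i xs) | i j. i \<le> j \<and> j \<le> length xs}"

definition is_string :: "('k::field) itself \<Rightarrow> nat \<Rightarrow> (nat \<Rightarrow> obj) \<Rightarrow> nat \<Rightarrow> letter list \<Rightarrow> bool" where
  "is_string K n T v ls \<longleftrightarrow>
     v \<in> {1..n-1} \<and>
     (\<forall>x\<in>set ls. is_arrow K n T (fst x)) \<and>
     (ls \<noteq> [] \<longrightarrow> lsrc (hd ls) = v) \<and>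
     (\<forall>t. Suc t < length ls \<longrightarrow> ltgt (ls ! t) = lsrc (ls ! Suc t)) \<and>
     (\<forall>t. Suc t < length ls \<longrightarrow> \<not> (fst (ls ! t) = fst (ls ! Suc t) \<and> snd (ls ! t) \<noteq> snd (ls ! Suc t))) \<and>
     (\<forall>w\<in>sublists ls. (\<forall>x\<in>set w. snd x) \<longrightarrow> \<not> zero_rel K n T (map fst w)) \<and>
     (\<forall>w\<in>sublists ls. (\<forall>x\<in>set w. \<not> snd x) \<longrightarrow> \<not> zero_rel K n T (rev (map fst w)))"

definition is_sigma :: "('k::field) itself \<Rightarrow> nat \<Rightarrow> (nat \<Rightarrow> obj) \<Rightarrow> obj set \<Rightarrow> nat \<Rightarrow> letter list \<Rightarrow> bool" where
  "is_sigma K n T R v ls \<longleftrightarrow> is_string K n T v ls \<and> distinct (verts v ls) \<and>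
     set (verts v ls) = {i \<in> {1..n-1}. T i \<in> R} \<and>
     (\<forall>i\<in>{1..n-1}. T i \<in> R \<longrightarrow> snd (T i) \<le> snd (T (endv v ls)))"

definition is_top :: "nat \<Rightarrow> (nat \<Rightarrow> obj) \<Rightarrow> obj set \<Rightarrow> nat \<Rightarrow> bool" where
  "is_top n T R i \<longleftrightarrow> i \<in> {1..n-1} \<and> T i \<in> R \<and>
     (\<forall>j\<in>{1..n-1}. T j \<in> R \<longrightarrow> snd (T j) \<le> snd (T i))"

end

theory Submission
  imports Defs
begin

text \<open>Regard an indecomposable (a,b) as the arc over the interval [a, a+b-1] of the n-gon
  boundary.  Every summand of T lies in the wing of T_1 = (1,n-1), where Hom- and
  Ext-spaces become explicit: Ext^1 between wing objects is nonzero exactly when their arcs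
  cross, and maximal rigidity says that T is a maximal non-crossing family of wing arcs.

  Let A = T_i and B = T_j be the summands of maximal quasilength in R^T(X) and R^D(X).
  Maximality of the non-crossing family forces B to start right after A ends
  (a + b + 1 = a' mod n); if there were a gap, the arc from the end of A to the end of B
  could be added to T.  Hence the D-basis map with index 1 from T_j to T_i is nonzero, and
  it cannot factor through another summand because every such factorisation would pass
  through a summand of R^T(X) or R^D(X) longer than A or B.  So it is an arrow beta.
  (If X wraps around the tube, both tops are T_1 and the same conclusions hold.)

  All letters of the strings sigma^T_X and sigma^D_X are T-arrows (a D-arrow between
  overlapping arcs would factor through T_1), and every direct path of the form
  (T-arrows of sigma^T_X) beta (T-arrows of sigma^D_X reversed) composes to the D-basis
  map of index 1, which is nonzero; so no zero relation passes through beta.\<close>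

lemma cong_eq_if_abs_diff_less:
  fixes x y :: int
  assumes "\<bar>x - y\<bar> < int n" "[x = y] (mod int n)"
  shows "x = y"
proof -
  obtain k where k: "x - y = int n * k"
    using assms(2) by (auto simp: cong_iff_dvd_diff)
  show ?thesis
  proof (cases "k = 0")
    case True
    then show ?thesis using k by simp
  next
    case False
    then have "int n * 1 \<le> int n * \<bar>k\<bar>"
      by (intro mult_left_mono) auto
    then have "int n * 1 \<le> \<bar>int n * k\<bar>"
      by (simp add: abs_mult)
    then show ?thesis using assms(1) k by simp
  qed
qed

lemma cong_eq_or_eq_add_if_bounded:
  fixes x y :: int
  assumes "- int n < x - y" "x - y \<le> int n" "[x = y] (mod int n)"
  shows "x = y \<or> x = y + int n"
proof -
  obtain k where k: "x - y = int n * k"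
    using assms(3) by (auto simp: cong_iff_dvd_diff)
  have n: "int n > 0" using assms(1,2) by linarith
  have "k > -1"
  proof (rule ccontr)
    assume "\<not> k > -1"
    then have "int n * k \<le> int n * (-1)" using n by (intro mult_left_mono) auto
    then show False using k assms(1) by simp
  qed
  moreover have "k < 2"
  proof (rule ccontr)
    assume "\<not> k < 2"
    then have "int n * 2 \<le> int n * k" using n by (intro mult_left_mono) auto
    then show False using k assms(2) n by simp
  qed
  ultimately have "k = 0 \<or> k = 1" by linarith
  then show ?thesis using k by auto
qed

lemma cong_rep: "n > 0 \<Longrightarrow> [rep n a = a] (mod int n)"
  unfolding rep_def cong_def by (simp add: mod_simps)

section \<open>Hom- and Ext-spaces between indecomposables\<close>

lemma mem_BT_iff:
  "l \<in> BT n X Y \<longleftrightarrow> 1 \<le> l \<and> l \<le> snd X \<and> l \<le> snd Y \<and> [fst X + snd X - l = fst Y] (mod int n)"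
  unfolding BT_def by simp

lemma mem_BD_iff:
  assumes "n > 0"
  shows "l \<in> BD n X Y \<longleftrightarrow>
    1 \<le> l \<and> l \<le> snd Y \<and> l \<le> snd X \<and> [fst Y + 2 + snd Y - l = fst X] (mod int n)"
proof -
  have "[rep n (rep n (fst Y + 1) + 1) = rep n (fst Y + 1) + 1] (mod int n)"
    using cong_rep assms by blast
  moreover have "[rep n (fst Y + 1) + 1 = fst Y + 1 + 1] (mod int n)"
    using cong_rep[OF assms] cong_add_rcancel by blast
  ultimately have "[rep n (rep n (fst Y + 1) + 1) = fst Y + 1 + 1] (mod int n)"
    by (rule cong_trans)
  then have "[fst (tauinv n (tauinv n Y)) = fst Y + 2] (mod int n)"
    unfolding tauinv_def by (simp add: add.assoc)
  then have "[fst (tauinv n (tauinv n Y)) + snd Y - l = fst Y + 2 + snd Y - l] (mod int n)"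
    by (intro cong_diff cong_add) auto
  moreover have "snd (tauinv n (tauinv n Y)) = snd Y" unfolding tauinv_def by simp
  ultimately show ?thesis unfolding BD_def mem_BT_iff
    by (metis cong_sym cong_trans)
qed

lemma finite_BT: "finite (BT n X Y)"
  by (rule finite_subset[of _ "{1..snd X}"]) (auto simp: BT_def)

lemma finite_BD: "finite (BD n X Y)"
  unfolding BD_def by (rule finite_BT)

lemma ext1_nz_iff:
  assumes "n > 0"
  shows "ext1_nz n X Y \<longleftrightarrow> (\<exists>l. 1 \<le> l \<and> l \<le> snd X \<and> l \<le> snd Y \<and>
     ([fst X + snd X - l = fst Y - 1] (mod int n) \<or> [fst Y + 1 + snd Y - l = fst X] (mod int n)))"
proof -
  have c: "[fst (tau n Y) = fst Y - 1] (mod int n)"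
    unfolding tau_def using cong_rep[OF assms] by simp
  have s: "snd (tau n Y) = snd Y" unfolding tau_def by simp
  have T: "[fst X + snd X - l = fst (tau n Y)] (mod int n) \<longleftrightarrow>
      [fst X + snd X - l = fst Y - 1] (mod int n)" for l
    using c by (meson cong_sym cong_trans)
  have "[fst (tau n Y) + 2 + snd Y - l = fst Y - 1 + 2 + snd Y - l] (mod int n)" for l
    using c by (intro cong_diff cong_add) auto
  then have D: "[fst (tau n Y) + 2 + snd Y - l = fst X] (mod int n) \<longleftrightarrow>
      [fst Y + 1 + snd Y - l = fst X] (mod int n)" for l
    by (smt (verit, best) cong_sym cong_trans)
  show ?thesis
    unfolding ext1_nz_def ex_in_conv[symmetric] mem_BT_iff mem_BD_iff[OF assms] T D s
    by blast
qed

definition in_wing :: "nat \<Rightarrow> obj \<Rightarrow> bool" where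
  "in_wing n Y \<longleftrightarrow> 1 \<le> fst Y \<and> 1 \<le> snd Y \<and> fst Y + snd Y \<le> int n"

definition crosses :: "obj \<Rightarrow> obj \<Rightarrow> bool" where
  "crosses Y Z \<longleftrightarrow> fst Y < fst Z \<and> fst Z \<le> fst Y + snd Y \<and> fst Y + snd Y \<le> fst Z + snd Z - 1"

lemma in_wing_valid: "in_wing n Y \<Longrightarrow> valid n Y"
  unfolding in_wing_def valid_def by auto

lemma mem_BT_wing_iff:
  assumes "in_wing n X" "in_wing n Y"
  shows "l \<in> BT n X Y \<longleftrightarrow> l = fst X + snd X - fst Y \<and> fst X \<le> fst Y \<and>
    fst Y \<le> fst X + snd X - 1 \<and> fst X + snd X \<le> fst Y + snd Y"
proof
  assume "l \<in> BT n X Y"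
  then have l: "1 \<le> l" "l \<le> snd X" "l \<le> snd Y" "[fst X + snd X - l = fst Y] (mod int n)"
    by (auto simp: mem_BT_iff)
  have "fst X + snd X - l = fst Y"
    using l assms unfolding in_wing_def by (intro cong_eq_if_abs_diff_less[of _ _ n]) auto
  then show "l = fst X + snd X - fst Y \<and> fst X \<le> fst Y \<and> fst Y \<le> fst X + snd X - 1 \<and>
      fst X + snd X \<le> fst Y + snd Y"
    using l by linarith
qed (auto simp: mem_BT_iff)

lemma mem_BD_wing_cases:
  assumes "n > 0" "in_wing n X" "in_wing n Y" "l \<in> BD n X Y"
  shows "fst X = fst Y + snd Y + 2 - l \<or> (l = 1 \<and> fst X = 1 \<and> fst Y + snd Y = int n)"
proof -
  have l: "1 \<le> l" "l \<le> snd Y" "l \<le> snd X" "[fst Y + 2 + snd Y - l = fst X] (mod int n)"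
    using assms(4) mem_BD_iff[OF assms(1)] by auto
  have "fst Y + 2 + snd Y - l = fst X \<or> fst Y + 2 + snd Y - l = fst X + int n"
    using l assms(2,3) unfolding in_wing_def by (intro cong_eq_or_eq_add_if_bounded) auto
  then show ?thesis using l assms(2,3) unfolding in_wing_def by auto
qed

lemma one_mem_BD_iff:
  assumes "n > 0" "1 \<le> snd X" "1 \<le> snd Y"
  shows "1 \<in> BD n X Y \<longleftrightarrow> [fst Y + snd Y + 1 = fst X] (mod int n)"
  using mem_BD_iff[OF assms(1), of 1 X Y] assms(2,3) by (simp add: add.commute add.left_commute)

lemma ext1_nz_wing_iff_crosses:
  assumes "n > 0" "in_wing n X" "in_wing n Y"
  shows "ext1_nz n X Y \<longleftrightarrow> crosses X Y \<or> crosses Y X"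
proof
  assume "ext1_nz n X Y"
  then obtain l where l: "1 \<le> l" "l \<le> snd X" "l \<le> snd Y"
    and c: "[fst X + snd X - l = fst Y - 1] (mod int n) \<or> [fst Y + 1 + snd Y - l = fst X] (mod int n)"
    using ext1_nz_iff[OF assms(1)] by auto
  have "fst X + snd X - l = fst Y - 1 \<or> fst Y + 1 + snd Y - l = fst X"
    using c l assms(2,3) cong_eq_if_abs_diff_less[of _ _ n] unfolding in_wing_def by (smt (verit))
  then show "crosses X Y \<or> crosses Y X" using l unfolding crosses_def by auto
next
  assume "crosses X Y \<or> crosses Y X"
  then show "ext1_nz n X Y"
  proof
    assume "crosses X Y"
    then show ?thesis unfolding ext1_nz_iff[OF assms(1)] crosses_def
      by (intro exI[of _ "fst X + snd X + 1 - fst Y"]) auto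
  next
    assume "crosses Y X"
    then show ?thesis unfolding ext1_nz_iff[OF assms(1)] crosses_def
      by (intro exI[of _ "fst Y + snd Y + 1 - fst X"]) auto
  qed
qed

lemma BT_from_wing_nonempty_iff:
  assumes "in_wing n Y" "1 \<le> fst X" "fst X \<le> int n"
  shows "BT n Y X \<noteq> {} \<longleftrightarrow>
    fst Y \<le> fst X \<and> fst X \<le> fst Y + snd Y - 1 \<and> fst Y + snd Y - fst X \<le> snd X"
proof
  assume "BT n Y X \<noteq> {}"
  then obtain l where l: "1 \<le> l" "l \<le> snd Y" "l \<le> snd X" "[fst Y + snd Y - l = fst X] (mod int n)"
    by (auto simp: mem_BT_iff)
  have "fst Y + snd Y - l = fst X"
    using l assms unfolding in_wing_def by (intro cong_eq_if_abs_diff_less[of _ _ n]) auto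
  then show "fst Y \<le> fst X \<and> fst X \<le> fst Y + snd Y - 1 \<and> fst Y + snd Y - fst X \<le> snd X"
    using l by linarith
next
  assume "fst Y \<le> fst X \<and> fst X \<le> fst Y + snd Y - 1 \<and> fst Y + snd Y - fst X \<le> snd X"
  then have "fst Y + snd Y - fst X \<in> BT n Y X" by (auto simp: mem_BT_iff)
  then show "BT n Y X \<noteq> {}" by auto
qed

lemma BD_from_wing_nonempty_iff:
  assumes "n > 0" "in_wing n Y" "1 \<le> fst X" "1 \<le> snd X" "fst X + snd X \<le> int n - 1"
  shows "BD n Y X \<noteq> {} \<longleftrightarrow>
    fst X + 2 \<le> fst Y \<and> fst Y \<le> fst X + snd X + 1 \<and> fst X + snd X + 1 \<le> fst Y + snd Y - 1"
proof
  assume "BD n Y X \<noteq> {}"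
  then obtain l where "l \<in> BD n Y X" by auto
  then have l: "1 \<le> l" "l \<le> snd X" "l \<le> snd Y" "[fst X + 2 + snd X - l = fst Y] (mod int n)"
    using mem_BD_iff[OF assms(1)] by auto
  have "fst X + 2 + snd X - l = fst Y"
    using l assms unfolding in_wing_def by (intro cong_eq_if_abs_diff_less[of _ _ n]) auto
  then show "fst X + 2 \<le> fst Y \<and> fst Y \<le> fst X + snd X + 1 \<and> fst X + snd X + 1 \<le> fst Y + snd Y - 1"
    using l by linarith
next
  assume "fst X + 2 \<le> fst Y \<and> fst Y \<le> fst X + snd X + 1 \<and> fst X + snd X + 1 \<le> fst Y + snd Y - 1"
  then have "fst X + snd X + 2 - fst Y \<in> BD n Y X" using mem_BD_iff[OF assms(1)] by auto
  then show "BD n Y X \<noteq> {}" by auto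
qed

lemma BD_from_wing_common_point:
  assumes "n > 0" "in_wing n Y" "in_wing n Z" "BD n Y X \<noteq> {}" "BD n Z X \<noteq> {}"
  shows "\<exists>p. fst Y \<le> p \<and> p \<le> fst Y + snd Y - 1 \<and> fst Z \<le> p \<and> p \<le> fst Z + snd Z - 1"
proof -
  obtain l m where "l \<in> BD n Y X" "m \<in> BD n Z X" using assms(4,5) by auto
  then have l: "1 \<le> l" "l \<le> snd X" "l \<le> snd Y" "[fst X + 2 + snd X - l = fst Y] (mod int n)"
    and m: "1 \<le> m" "m \<le> snd X" "m \<le> snd Z" "[fst X + 2 + snd X - m = fst Z] (mod int n)"
    using mem_BD_iff[OF assms(1)] by auto
  have "int n dvd ((fst X + 2 + snd X - m - fst Z) - (fst X + 2 + snd X - l - fst Y))"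
    using l(4) m(4) unfolding cong_iff_dvd_diff by (rule dvd_diff[rotated])
  moreover have "(fst X + 2 + snd X - m - fst Z) - (fst X + 2 + snd X - l - fst Y) =
      (fst Y + l) - (fst Z + m)" by simp
  ultimately have "[fst Y + l = fst Z + m] (mod int n)" by (simp add: cong_iff_dvd_diff)
  then have "fst Y + l = fst Z + m"
    using l m assms(2,3) unfolding in_wing_def by (intro cong_eq_if_abs_diff_less[of _ _ n]) auto
  then show ?thesis using l m by (intro exI[of _ "fst Y + l - 1"]) auto
qed

lemma BD_nonempty_mono:
  assumes "n > 0" "fst Y = fst Z" "snd Y \<le> snd Z" "BD n Y X \<noteq> {}"
  shows "BD n Z X \<noteq> {}"
proof -
  obtain l where "l \<in> BD n Y X" using assms(4) by auto
  then have "l \<in> BD n Z X" using assms mem_BD_iff[OF assms(1)] by auto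
  then show ?thesis by auto
qed

lemma BT_nonempty_mono:
  assumes "fst Y + snd Y = fst Z + snd Z" "snd Y \<le> snd Z" "BT n Y X \<noteq> {}"
  shows "BT n Z X \<noteq> {}"
  using assms by (fastforce simp: mem_BT_iff)

definition eT :: "int \<Rightarrow> ('k::field) mor" where
  "eT l = (\<lambda>x. if x = l then 1 else 0, \<lambda>_. 0)"

definition eD :: "int \<Rightarrow> ('k::field) mor" where
  "eD q = (\<lambda>_. 0, \<lambda>x. if x = q then 1 else 0)"

definition idx :: "arrow \<Rightarrow> int" where "idx a = snd (snd (snd a))"

lemma bmor_eq: "bmor a = (case akind a of TK \<Rightarrow> eT (idx a) | DK \<Rightarrow> eD (idx a))"
  unfolding bmor_def eT_def eD_def idx_def by (cases "akind a") auto

lemma fst_eT [simp]: "fst (eT l) x = (if x = l then 1 else 0)" by (simp add: eT_def)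

lemma snd_eT [simp]: "snd (eT l) x = 0" by (simp add: eT_def)

lemma fst_eD [simp]: "fst (eD l) x = 0" by (simp add: eD_def)

lemma snd_eD [simp]: "snd (eD l) x = (if x = l then 1 else 0)" by (simp add: eD_def)

lemma fst_comp: "fst (comp n X Y Z g f) r = (\<Sum>l\<in>BT n X Y. \<Sum>m\<in>BT n Y Z.
            if l + m - snd Y = r \<and> 1 \<le> r then fst f l * fst g m else 0)"
  unfolding comp_def by simp

lemma snd_comp: "snd (comp n X Y Z g f) s = (\<Sum>m\<in>BT n X Y. \<Sum>q\<in>BD n Y Z.
            if s = q - m + snd X \<and> s \<in> BD n X Z then fst f m * snd g q else 0)
        + (\<Sum>q\<in>BD n X Y. \<Sum>m\<in>BT n Y Z.
            if s = q - m + snd Z \<and> s \<in> BD n X Z then snd f q * fst g m else 0)"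
  unfolding comp_def by simp

lemma sum_sum_delta:
  assumes "finite A" "finite B"
  shows "(\<Sum>x\<in>A. \<Sum>y\<in>B. if P x y then (if x = a then 1 else 0) * (if y = b then 1 else 0) else 0) =
    (if a \<in> A \<and> b \<in> B \<and> P a b then 1 else (0::'a::semiring_1))"
proof -
  have inner: "(\<Sum>y\<in>B. if P x y then (if x = a then 1 else 0) * (if y = b then 1 else 0) else 0) =
      (if x = a then (if b \<in> B \<and> P a b then 1 else 0) else (0::'a))" for x
  proof -
    have "(\<Sum>y\<in>B. if P x y then (if x = a then 1 else 0) * (if y = b then 1 else 0) else 0) =
        (\<Sum>y\<in>B. if y = b then (if x = a \<and> P x b then 1 else 0) else (0::'a))"
      by (rule sum.cong) auto
    then show ?thesis using assms(2) by auto
  qed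
  show ?thesis using assms(1) by (simp add: inner)
qed

lemma sum_delta_conj:
  assumes "finite A"
  shows "(\<Sum>q\<in>A. if s = q \<and> P then F q else 0) = (if s \<in> A \<and> P then F s else (0::'a::comm_monoid_add))"
proof -
  have "(\<Sum>q\<in>A. if s = q \<and> P then F q else 0) = (\<Sum>q\<in>A. if s = q then (if P then F q else 0) else 0)"
    by (rule sum.cong) auto
  also have "\<dots> = (if s \<in> A \<and> P then F s else 0)" using assms by simp
  finally show ?thesis .
qed

lemma comp_eT_eT:
  assumes "l \<in> BT n X Y" "m \<in> BT n Y Z"
  shows "comp n X Y Z (eT m) (eT l) =
    (if 1 \<le> l + m - snd Y then eT (l + m - snd Y) else (zmor :: 'k::field mor))"
proof -
  have "fst (comp n X Y Z (eT m) (eT l)) r = (if l + m - snd Y = r \<and> 1 \<le> r then 1 else (0::'k))"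
    for r
    unfolding fst_comp fst_eT by (subst sum_sum_delta[OF finite_BT finite_BT]) (use assms in auto)
  moreover have "snd (comp n X Y Z (eT m) (eT l)) = (\<lambda>_. 0 :: 'k)"
    unfolding snd_comp by (simp add: fun_eq_iff cong: if_cong)
  ultimately show ?thesis by (intro prod_eqI) (auto simp: zmor_def fun_eq_iff)
qed

lemma comp_eD_eT:
  assumes "l \<in> BT n X Y" "q \<in> BD n Y Z"
  shows "comp n X Y Z (eD q) (eT l) =
    (if q - l + snd X \<in> BD n X Z then eD (q - l + snd X) else (zmor :: 'k::field mor))"
proof -
  have "fst (comp n X Y Z (eD q) (eT l)) = (\<lambda>_. 0 :: 'k)"
    unfolding fst_comp by (simp add: fun_eq_iff cong: if_cong)
  moreover have "snd (comp n X Y Z (eD q) (eT l)) s =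
      (if s = q - l + snd X \<and> s \<in> BD n X Z then 1 else (0::'k))" for s
    unfolding snd_comp fst_eT snd_eD
    by (subst sum_sum_delta[OF finite_BT finite_BD]) (use assms in \<open>auto cong: if_cong\<close>)
  ultimately show ?thesis by (intro prod_eqI) (auto simp: zmor_def fun_eq_iff)
qed

lemma comp_eT_eD:
  assumes "q \<in> BD n X Y" "m \<in> BT n Y Z"
  shows "comp n X Y Z (eT m) (eD q) =
    (if q - m + snd Z \<in> BD n X Z then eD (q - m + snd Z) else (zmor :: 'k::field mor))"
proof -
  have "fst (comp n X Y Z (eT m) (eD q)) = (\<lambda>_. 0 :: 'k)"
    unfolding fst_comp by (simp add: fun_eq_iff cong: if_cong)
  moreover have "snd (comp n X Y Z (eT m) (eD q)) s =
      (if s = q - m + snd Z \<and> s \<in> BD n X Z then 1 else (0::'k))" for s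
    unfolding snd_comp fst_eT snd_eD
    by (subst sum_sum_delta[OF finite_BD finite_BT]) (use assms in \<open>auto cong: if_cong\<close>)
  ultimately show ?thesis by (intro prod_eqI) (auto simp: zmor_def fun_eq_iff)
qed

lemma morph_fst: "f \<in> morph K n X Y \<Longrightarrow> l \<notin> BT n X Y \<Longrightarrow> fst f l = 0"
  unfolding morph_def by auto

lemma morph_snd: "f \<in> morph K n X Y \<Longrightarrow> q \<notin> BD n X Y \<Longrightarrow> snd f q = 0"
  unfolding morph_def by auto

lemma eT_morph: "l \<in> BT n X Y \<Longrightarrow> (eT l :: 'k::field mor) \<in> morph K n X Y"
  unfolding morph_def by auto

lemma eD_morph: "q \<in> BD n X Y \<Longrightarrow> (eD q :: 'k::field mor) \<in> morph K n X Y"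
  unfolding morph_def by auto

lemma fst_idm: "fst (idm X :: 'k::field mor) (snd X) = 1"
  unfolding idm_def by simp

lemma eD_in_rad:
  assumes "q \<in> BD n X Y"
  shows "(eD q :: 'k::field mor) \<in> rad K n X Y"
proof -
  have "\<not> iso K n X Y (eD q)"
  proof
    assume "iso K n X Y (eD q)"
    then obtain g where g: "comp n X Y X g (eD q) = (idm X :: 'k mor)" unfolding iso_def by blast
    have "fst (comp n X Y X g (eD q)) (snd X) = (0::'k)"
      unfolding fst_comp by (simp cong: if_cong)
    then show False using g fst_idm[of X, where 'k='k] by simp
  qed
  then show ?thesis unfolding rad_def using eD_morph[OF assms] by auto
qed

lemma eT_in_rad:
  assumes "in_wing n X" "in_wing n Y" "l \<in> BT n X Y" "\<not> (X = Y \<and> l = snd X)"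
  shows "(eT l :: 'k::field mor) \<in> rad K n X Y"
proof -
  have e: "BT n Y X = {}"
  proof (rule ccontr)
    assume "BT n Y X \<noteq> {}"
    then obtain m where m: "m \<in> BT n Y X" by auto
    have a: "l = fst X + snd X - fst Y \<and> fst X \<le> fst Y \<and> fst Y \<le> fst X + snd X - 1 \<and>
        fst X + snd X \<le> fst Y + snd Y"
      using mem_BT_wing_iff[OF assms(1,2)] assms(3) by blast
    have b: "fst Y \<le> fst X \<and> fst Y + snd Y \<le> fst X + snd X"
      using mem_BT_wing_iff[OF assms(2,1)] m by blast
    have "X = Y" using a b by (intro prod_eqI) auto
    moreover have "l = snd X" using a b by auto
    ultimately show False using assms(4) by blast
  qed
  have "\<not> iso K n X Y (eT l)"
  proof
    assume "iso K n X Y (eT l)"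
    then obtain g where g: "comp n X Y X g (eT l) = (idm X :: 'k mor)" unfolding iso_def by blast
    have "fst (comp n X Y X g (eT l)) (snd X) = (0::'k)"
      unfolding fst_comp e by simp
    then show False using g fst_idm[of X, where 'k='k] by simp
  qed
  then show ?thesis unfolding rad_def using eT_morph[OF assms(3)] by auto
qed

lemma BT_wing_self:
  assumes "in_wing n Y"
  shows "BT n Y Y = {snd Y}"
  using mem_BT_wing_iff[OF assms assms] assms unfolding in_wing_def by auto

lemma comp_endo_wing:
  assumes "in_wing n Y"
  shows "comp n Y Y Y g h =
    (\<lambda>r. if r = snd Y then fst h (snd Y) * fst g (snd Y) else 0,
     \<lambda>s. if s \<in> BD n Y Y then fst h (snd Y) * snd g s + snd h s * fst g (snd Y) else (0::'k::field))"
proof (rule prod_eqI)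
  have B: "BT n Y Y = {snd Y}" using BT_wing_self[OF assms] .
  have "1 \<le> snd Y" using assms unfolding in_wing_def by simp
  then show "fst (comp n Y Y Y g h) =
      fst (\<lambda>r. if r = snd Y then fst h (snd Y) * fst g (snd Y) else 0,
        \<lambda>s. if s \<in> BD n Y Y then fst h (snd Y) * snd g s + snd h s * fst g (snd Y) else 0)"
    unfolding fst_comp B by auto
  have "snd (comp n Y Y Y g h) s =
      (\<Sum>q\<in>BD n Y Y. if s = q \<and> s \<in> BD n Y Y then fst h (snd Y) * snd g q else 0) +
      (\<Sum>q\<in>BD n Y Y. if s = q \<and> s \<in> BD n Y Y then snd h q * fst g (snd Y) else 0)" for s
    unfolding snd_comp B by simp
  then show "snd (comp n Y Y Y g h) =
      snd (\<lambda>r. if r = snd Y then fst h (snd Y) * fst g (snd Y) else 0,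
        \<lambda>s. if s \<in> BD n Y Y then fst h (snd Y) * snd g s + snd h s * fst g (snd Y) else 0)"
    by (auto simp: sum_delta_conj finite_BD)
qed

text \<open>An endomorphism h of a wing object with T-coefficient c0 \<noteq> 0 at the identity index
  is invertible, with inverse c0^-1 id - c0^-2 (D-part of h).\<close>

lemma rad_endo_coeff_self_zero:
  assumes "in_wing n Y" "h \<in> rad (K::'k::field itself) n Y Y"
  shows "fst h (snd Y) = 0"
proof (rule ccontr)
  define c0 where "c0 = fst h (snd Y)"
  assume "fst h (snd Y) \<noteq> 0"
  then have c0: "c0 \<noteq> 0" unfolding c0_def by simp
  define g :: "'k mor" where "g = (\<lambda>x. if x = snd Y then inverse c0 else 0,
      \<lambda>q. if q \<in> BD n Y Y then - snd h q * inverse (c0 * c0) else 0)"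
  have "h \<in> morph K n Y Y" using assms(2) unfolding rad_def by auto
  moreover have "g \<in> morph K n Y Y" unfolding morph_def g_def using BT_wing_self[OF assms(1)] by auto
  moreover have "comp n Y Y Y g h = idm Y" "comp n Y Y Y h g = idm Y"
    unfolding comp_endo_wing[OF assms(1)] idm_def using c0
    by (auto simp: g_def c0_def[symmetric] field_simps fun_eq_iff)
  ultimately have "iso K n Y Y h" unfolding iso_def by blast
  then show False using assms(2) unfolding rad_def by auto
qed

lemma madd_zmor: "madd f zmor = f"
  unfolding madd_def zmor_def by simp

lemma rad2_snd_eq_zero:
  assumes "\<And>m h g. m \<in> {1..n-1} \<Longrightarrow> h \<in> rad K n X (T m) \<Longrightarrow> g \<in> rad K n (T m) Y \<Longrightarrow>
      snd (comp n X (T m) Y g h) x = 0"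
    and "r \<in> rad2 K n T X Y"
  shows "snd r x = 0"
  using assms(2)
proof (induction rule: rad2.induct)
  case zero
  then show ?case by (simp add: zmor_def)
next
  case (add m h g r)
  then show ?case using assms(1)[of m h g] by (simp add: madd_def)
qed

lemma T_arrow_idx_mem_BT:
  assumes "is_arrow (K::'k::field itself) n T a" "akind a = TK"
  shows "idx a \<in> BT n (T (atgt a)) (T (asrc a))"
proof (rule ccontr)
  assume "idx a \<notin> BT n (T (atgt a)) (T (asrc a))"
  moreover have "(eT (idx a) :: 'k mor) \<in> morph K n (T (atgt a)) (T (asrc a))"
    using assms unfolding is_arrow_def rad_def by (simp add: bmor_eq)
  ultimately have "fst (eT (idx a) :: 'k mor) (idx a) = 0" by (rule morph_fst[rotated])
  then show False by simp
qed

lemma D_arrow_idx_mem_BD: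
  assumes "is_arrow (K::'k::field itself) n T a" "akind a = DK"
  shows "idx a \<in> BD n (T (atgt a)) (T (asrc a))"
proof (rule ccontr)
  assume "idx a \<notin> BD n (T (atgt a)) (T (asrc a))"
  moreover have "(eD (idx a) :: 'k mor) \<in> morph K n (T (atgt a)) (T (asrc a))"
    using assms unfolding is_arrow_def rad_def by (simp add: bmor_eq)
  ultimately have "snd (eD (idx a) :: 'k mor) (idx a) = 0" by (rule morph_snd[rotated])
  then show False by simp
qed

lemma eD_neq_zmor: "(eD q :: 'k::field mor) \<noteq> zmor"
proof
  assume "(eD q :: 'k mor) = zmor"
  then have "snd (eD q :: 'k mor) q = snd (zmor :: 'k mor) q" by simp
  then show False by (simp add: zmor_def)
qed

lemma pathmor_Cons:
  "r \<noteq> [] \<Longrightarrow> pathmor K n T (a # r) =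
    comp n (T (atgt (last r))) (T (atgt a)) (T (asrc a)) (bmor a) (pathmor K n T r)"
  by (cases r) auto

lemma mem_sublists_iff: "w \<in> sublists xs \<longleftrightarrow> (\<exists>p s. xs = p @ w @ s)"
proof
  assume "w \<in> sublists xs"
  then obtain i j where ij: "i \<le> j" "j \<le> length xs" "w = take (j - i) (drop i xs)"
    unfolding sublists_def by auto
  have "xs = take i xs @ drop i xs" by simp
  also have "drop i xs = take (j - i) (drop i xs) @ drop (j - i) (drop i xs)"
    by (rule append_take_drop_id[symmetric])
  also have "drop (j - i) (drop i xs) = drop j xs" using ij by simp
  finally show "\<exists>p s. xs = p @ w @ s" using ij by blast
next
  assume "\<exists>p s. xs = p @ w @ s"
  then obtain p s where e: "xs = p @ w @ s" by blast
  have "w = take (length p + length w - length p) (drop (length p) xs)" using e by simp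
  moreover have "length p \<le> length p + length w" "length p + length w \<le> length xs" using e by auto
  ultimately show "w \<in> sublists xs" unfolding sublists_def by blast
qed

lemma infix_of_append_singleton_cases:
  assumes "p @ w @ s = xs @ [b] @ ys"
  shows "(\<exists>s'. xs = p @ w @ s') \<or> (\<exists>p'. ys = p' @ w @ s) \<or>
    (\<exists>w1 w2. w = w1 @ [b] @ w2 \<and> xs = p @ w1 \<and> ys = w2 @ s)"
proof -
  from assms have "p @ (w @ s) = xs @ (b # ys)" by simp
  then obtain us where us: "(p = xs @ us \<and> us @ w @ s = b # ys) \<or> (p @ us = xs \<and> w @ s = us @ b # ys)"
    unfolding append_eq_append_conv2 by blast
  then show ?thesis
  proof
    assume h: "p = xs @ us \<and> us @ w @ s = b # ys"
    show ?thesis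
    proof (cases us)
      case Nil
      show ?thesis
      proof (cases w)
        case Nil
        then show ?thesis using h \<open>us = []\<close> by auto
      next
        case (Cons c w')
        then have "c = b" "ys = w' @ s" using h \<open>us = []\<close> by auto
        then show ?thesis using h \<open>us = []\<close> Cons by (intro disjI2) auto
      qed
    next
      case (Cons c us')
      then show ?thesis using h by auto
    qed
  next
    assume h: "p @ us = xs \<and> w @ s = us @ b # ys"
    then obtain vs where vs: "(w = us @ vs \<and> vs @ s = b # ys) \<or> (w @ vs = us \<and> s = vs @ b # ys)"
      unfolding append_eq_append_conv2 by blast
    then show ?thesis
    proof
      assume h2: "w = us @ vs \<and> vs @ s = b # ys"
      show ?thesis
      proof (cases vs)
        case Nil
        then show ?thesis using h h2 by auto
      next
        case (Cons c vs')
        then show ?thesis using h h2 by auto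
      qed
    next
      assume h2: "w @ vs = us \<and> s = vs @ b # ys"
      then show ?thesis using h by auto
    qed
  qed
qed

lemma flip_flip [simp]: "flip (flip x) = x" unfolding flip_def by simp

lemma fst_flip [simp]: "fst (flip x) = fst x" unfolding flip_def by simp

lemma snd_flip [simp]: "snd (flip x) = (\<not> snd x)" unfolding flip_def by simp

lemma lsrc_flip [simp]: "lsrc (flip x) = ltgt x" unfolding flip_def lsrc_def ltgt_def by simp

lemma ltgt_flip [simp]: "ltgt (flip x) = lsrc x" unfolding flip_def lsrc_def ltgt_def by simp

lemma inv_letters_inv_letters [simp]: "inv_letters (inv_letters ls) = ls"
proof -
  have "map (flip \<circ> flip) ls = ls" by (induction ls) auto
  then show ?thesis unfolding inv_letters_def by (simp add: rev_map)
qed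

lemma inv_letters_append: "inv_letters (a @ b) = inv_letters b @ inv_letters a"
  unfolding inv_letters_def by simp

lemma set_inv_letters: "set (inv_letters ls) = flip ` set ls"
  unfolding inv_letters_def by simp

lemma map_fst_inv_letters: "map fst (inv_letters ls) = rev (map fst ls)"
  unfolding inv_letters_def by (simp add: rev_map comp_def)

lemma endv_eq_ltgt_last: "ls \<noteq> [] \<Longrightarrow> endv v ls = ltgt (last ls)"
  unfolding endv_def verts_def by (simp add: last_map)

lemma endv_Nil: "endv v [] = v"
  unfolding endv_def verts_def by simp

lemma successively_inv_letters:
  "successively P (inv_letters ls) \<longleftrightarrow> successively (\<lambda>x y. P (flip y) (flip x)) ls"
  unfolding inv_letters_def by (simp add: successively_map)

lemma successively_inv_lettersI:
  assumes "successively P ls" "\<And>x y. P x y \<Longrightarrow> P (flip y) (flip x)"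
  shows "successively P (inv_letters ls)"
  unfolding successively_inv_letters using assms(1) by (rule successively_mono) (use assms(2) in blast)

lemma reduced_inv_letters:
  "successively (\<lambda>x y. \<not> (fst x = fst y \<and> snd x \<noteq> snd y)) ls \<Longrightarrow>
   successively (\<lambda>x y. \<not> (fst x = fst y \<and> snd x \<noteq> snd y)) (inv_letters ls)"
  by (erule successively_inv_lettersI) auto

lemma hd_inv_letters: "ls \<noteq> [] \<Longrightarrow> hd (inv_letters ls) = flip (last ls)"
  unfolding inv_letters_def by (simp add: hd_rev last_map)

lemma successively_map_fst_direct:
  assumes "successively (\<lambda>x y. ltgt x = lsrc y) w" "\<forall>x\<in>set w. snd x"
  shows "successively (\<lambda>\<alpha> \<beta>. atgt \<alpha> = asrc \<beta>) (map fst w)"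
  unfolding successively_map
  using assms(1) by (rule successively_mono) (use assms(2) in \<open>auto simp: lsrc_def ltgt_def\<close>)

lemma is_stringD:
  assumes "is_string K n T v ls"
  shows "v \<in> {1..n-1}" "\<forall>x\<in>set ls. is_arrow K n T (fst x)" "ls \<noteq> [] \<longrightarrow> lsrc (hd ls) = v"
    "successively (\<lambda>x y. ltgt x = lsrc y) ls"
    "successively (\<lambda>x y. \<not> (fst x = fst y \<and> snd x \<noteq> snd y)) ls"
    "\<forall>w\<in>sublists ls. (\<forall>x\<in>set w. snd x) \<longrightarrow> \<not> zero_rel K n T (map fst w)"
    "\<forall>w\<in>sublists ls. (\<forall>x\<in>set w. \<not> snd x) \<longrightarrow> \<not> zero_rel K n T (rev (map fst w))"
  using assms unfolding is_string_def by (auto simp: successively_conv_nth)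

lemma lsrc_ltgt_nth_verts:
  assumes "ls \<noteq> [] \<longrightarrow> lsrc (hd ls) = v"
    and "\<forall>t. Suc t < length ls \<longrightarrow> ltgt (ls ! t) = lsrc (ls ! Suc t)"
    and "t < length ls"
  shows "lsrc (ls ! t) = verts v ls ! t \<and> ltgt (ls ! t) = verts v ls ! Suc t"
proof
  show "ltgt (ls ! t) = verts v ls ! Suc t" using assms(3) unfolding verts_def by simp
  show "lsrc (ls ! t) = verts v ls ! t"
  proof (cases t)
    case 0
    then show ?thesis using assms(1,3) unfolding verts_def by (simp add: hd_conv_nth)
  next
    case (Suc t')
    then have "ltgt (ls ! t') = lsrc (ls ! t)" using assms(2,3) by auto
    then show ?thesis using Suc assms(3) unfolding verts_def by simp
  qed
qed

lemma sigma_letter_endpoints: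
  assumes sg: "is_sigma K n T R v ls" and x: "x \<in> set ls"
  shows "asrc (fst x) \<in> {i \<in> {1..n-1}. T i \<in> R}" "atgt (fst x) \<in> {i \<in> {1..n-1}. T i \<in> R}"
    "asrc (fst x) \<noteq> atgt (fst x)"
proof -
  have st: "is_string K n T v ls" and dv: "distinct (verts v ls)"
    and sv: "set (verts v ls) = {i \<in> {1..n-1}. T i \<in> R}" using sg unfolding is_sigma_def by auto
  obtain t where t: "t < length ls" "ls ! t = x" using x by (auto simp: in_set_conv_nth)
  have e: "lsrc x = verts v ls ! t" "ltgt x = verts v ls ! Suc t"
    using lsrc_ltgt_nth_verts[of ls v t] st t unfolding is_string_def by auto
  have len: "length (verts v ls) = Suc (length ls)" unfolding verts_def by simp
  have "lsrc x \<in> set (verts v ls)" "ltgt x \<in> set (verts v ls)" "lsrc x \<noteq> ltgt x"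
    using e len t(1) dv by (auto simp: nth_eq_iff_index_eq)
  then show "asrc (fst x) \<in> {i \<in> {1..n-1}. T i \<in> R}" "atgt (fst x) \<in> {i \<in> {1..n-1}. T i \<in> R}"
    "asrc (fst x) \<noteq> atgt (fst x)"
    unfolding sv lsrc_def ltgt_def by (auto split: if_splits)
qed

lemma successively_append_singleton_append:
  "successively P (xs @ [y] @ zs) \<longleftrightarrow> successively P xs \<and> successively P zs \<and>
     (xs = [] \<or> P (last xs) y) \<and> (zs = [] \<or> P y (hd zs))"
  by (cases zs) (auto simp: successively_append_iff)

definition avoids_zero_rel :: "('k::field) itself \<Rightarrow> nat \<Rightarrow> (nat \<Rightarrow> obj) \<Rightarrow> letter list \<Rightarrow> bool" where
  "avoids_zero_rel K n T w \<longleftrightarrow>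
     ((\<forall>x\<in>set w. snd x) \<longrightarrow> \<not> zero_rel K n T (map fst w)) \<and>
     ((\<forall>x\<in>set w. \<not> snd x) \<longrightarrow> \<not> zero_rel K n T (rev (map fst w)))"

lemma is_string_avoids_zero_rel:
  "is_string K n T v ls \<Longrightarrow> w \<in> sublists ls \<Longrightarrow> avoids_zero_rel K n T w"
  unfolding avoids_zero_rel_def using is_stringD(6,7) by blast

lemma avoids_zero_rel_inv_letters:
  assumes "avoids_zero_rel K n T (inv_letters w)"
  shows "avoids_zero_rel K n T w"
proof -
  have "(\<forall>x\<in>set (inv_letters w). \<not> snd x) \<longleftrightarrow> (\<forall>x\<in>set w. snd x)"
    "(\<forall>x\<in>set (inv_letters w). snd x) \<longleftrightarrow> (\<forall>x\<in>set w. \<not> snd x)"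
    by (auto simp: set_inv_letters)
  then show ?thesis
    using assms unfolding avoids_zero_rel_def map_fst_inv_letters by simp
qed

lemma sublist_join_avoids_zero_rel:
  assumes sl: "is_string K n T v ls" and sm: "is_string K n T u ms"
    and nonzero: "\<And>p w1 w2 s. ls = p @ w1 \<Longrightarrow> inv_letters ms = w2 @ s \<Longrightarrow>
        \<forall>x\<in>set w1. snd x \<Longrightarrow> \<forall>x\<in>set w2. snd x \<Longrightarrow>
        \<not> zero_rel K n T (map fst w1 @ b # map fst w2)"
    and sub: "w \<in> sublists (ls @ [(b, True)] @ inv_letters ms)"
  shows "avoids_zero_rel K n T w"
proof -
  obtain p s where "ls @ [(b, True)] @ inv_letters ms = p @ w @ s"
    using sub unfolding mem_sublists_iff by blast
  from infix_of_append_singleton_cases[OF this[symmetric]]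
  consider (left) s' where "ls = p @ w @ s'" | (right) p' where "inv_letters ms = p' @ w @ s"
    | (through) w1 w2 where "w = w1 @ [(b, True)] @ w2" "ls = p @ w1" "inv_letters ms = w2 @ s"
    by blast
  then show ?thesis
  proof cases
    case left
    then have "w \<in> sublists ls" unfolding mem_sublists_iff by blast
    then show ?thesis using is_string_avoids_zero_rel[OF sl] by blast
  next
    case right
    have "ms = inv_letters s @ inv_letters w @ inv_letters p'"
      using arg_cong[OF right, of inv_letters] by (simp add: inv_letters_append)
    then have "inv_letters w \<in> sublists ms" unfolding mem_sublists_iff by blast
    then show ?thesis using is_string_avoids_zero_rel[OF sm] avoids_zero_rel_inv_letters by blast
  next
    case through
    then show ?thesis
      using nonzero[OF through(2,3)] unfolding avoids_zero_rel_def by auto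
  qed
qed

text \<open>The only subwords of the joined word that could be new zero relations are the direct
  ones passing through b.\<close>

lemma is_string_append_arrow_inverse:
  assumes sl: "is_string K n T v ls" and sm: "is_string K n T u ms"
    and b: "is_arrow K n T b" "asrc b = endv v ls" "atgt b = endv u ms"
    and fresh: "\<forall>x\<in>set ls \<union> set ms. fst x \<noteq> b"
    and nonzero: "\<And>p w1 w2 s. ls = p @ w1 \<Longrightarrow> inv_letters ms = w2 @ s \<Longrightarrow>
        \<forall>x\<in>set w1. snd x \<Longrightarrow> \<forall>x\<in>set w2. snd x \<Longrightarrow>
        \<not> zero_rel K n T (map fst w1 @ b # map fst w2)"
  shows "is_string K n T v (ls @ [(b, True)] @ inv_letters ms)"
proof -
  define bl :: letter where "bl = (b, True)"
  define ims where "ims = inv_letters ms"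
  have hd_ims: "ms \<noteq> [] \<and> hd ims = flip (last ms)" if "ims \<noteq> []"
    using that hd_inv_letters unfolding ims_def inv_letters_def by auto
  have arrows: "\<forall>x\<in>set (ls @ [bl] @ ims). is_arrow K n T (fst x)"
    using is_stringD(2)[OF sl] is_stringD(2)[OF sm] b(1)
    by (auto simp: bl_def ims_def set_inv_letters)
  have start: "ls @ [bl] @ ims \<noteq> [] \<longrightarrow> lsrc (hd (ls @ [bl] @ ims)) = v"
    using is_stringD(3)[OF sl] b(2) endv_Nil[of v]
    by (cases ls) (auto simp: bl_def lsrc_def)
  have walk: "successively (\<lambda>x y. ltgt x = lsrc y) (ls @ [bl] @ ims)"
  proof -
    have "successively (\<lambda>x y. ltgt x = lsrc y) ims"
      unfolding ims_def using is_stringD(4)[OF sm] by (rule successively_inv_lettersI) simp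
    moreover have "ims = [] \<or> ltgt bl = lsrc (hd ims)"
      using hd_ims b(3) by (cases "ims = []") (simp_all add: endv_eq_ltgt_last bl_def ltgt_def)
    moreover have "ls = [] \<or> ltgt (last ls) = lsrc bl"
      using b(2) by (cases "ls = []") (simp_all add: endv_eq_ltgt_last bl_def lsrc_def)
    ultimately show ?thesis
      using is_stringD(4)[OF sl] unfolding successively_append_singleton_append by blast
  qed
  have reduced: "successively (\<lambda>x y. \<not> (fst x = fst y \<and> snd x \<noteq> snd y)) (ls @ [bl] @ ims)"
  proof -
    have "successively (\<lambda>x y. \<not> (fst x = fst y \<and> snd x \<noteq> snd y)) ims"
      unfolding ims_def using is_stringD(5)[OF sm] by (rule reduced_inv_letters)
    moreover have "ims = [] \<or> \<not> (fst bl = fst (hd ims) \<and> snd bl \<noteq> snd (hd ims))"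
    proof (cases "ims = []")
      case False
      then have "hd ims = flip (last ms)" "last ms \<in> set ms" using hd_ims by auto
      then show ?thesis using fresh unfolding bl_def by auto
    qed simp
    moreover have "ls = [] \<or> \<not> (fst (last ls) = fst bl \<and> snd (last ls) \<noteq> snd bl)"
    proof (cases "ls = []")
      case False
      then have "last ls \<in> set ls" by simp
      then show ?thesis using fresh unfolding bl_def by auto
    qed simp
    ultimately show ?thesis
      using is_stringD(5)[OF sl] unfolding successively_append_singleton_append by blast
  qed
  have "avoids_zero_rel K n T w" if "w \<in> sublists (ls @ [(b, True)] @ inv_letters ms)" for w
    using sl sm nonzero that by (rule sublist_join_avoids_zero_rel)
  then have "\<forall>w\<in>sublists (ls @ [bl] @ ims). avoids_zero_rel K n T w"
    unfolding bl_def ims_def by blast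
  then show ?thesis
    unfolding is_string_def ims_def[symmetric] bl_def[symmetric]
    using is_stringD(1)[OF sl] arrows start walk reduced
    by (simp add: avoids_zero_rel_def successively_conv_nth)
qed

lemma direct_suffix_path:
  assumes "is_string K n T v ls" "ls = p @ w" "\<forall>x\<in>set w. snd x"
  shows "successively (\<lambda>\<alpha> \<beta>. atgt \<alpha> = asrc \<beta>) (map fst w)"
    and "w \<noteq> [] \<Longrightarrow> atgt (last (map fst w)) = endv v ls"
proof -
  have "successively (\<lambda>x y. ltgt x = lsrc y) w"
    using is_stringD(4)[OF assms(1)] assms(2) by (simp add: successively_append_iff)
  then show "successively (\<lambda>\<alpha> \<beta>. atgt \<alpha> = asrc \<beta>) (map fst w)"
    using assms(3) by (rule successively_map_fst_direct)
next
  assume "w \<noteq> []"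
  then have "endv v ls = ltgt (last w)" "snd (last w)"
    using assms(2,3) endv_eq_ltgt_last[of ls v] by auto
  then show "atgt (last (map fst w)) = endv v ls"
    using \<open>w \<noteq> []\<close> by (simp add: last_map ltgt_def)
qed

lemma direct_prefix_inv_path:
  assumes "is_string K n T u ms" "inv_letters ms = w @ s" "\<forall>x\<in>set w. snd x"
  shows "successively (\<lambda>\<alpha> \<beta>. atgt \<alpha> = asrc \<beta>) (map fst w)"
    and "w \<noteq> [] \<Longrightarrow> asrc (hd (map fst w)) = endv u ms"
    and "fst ` set w \<subseteq> fst ` set ms"
proof -
  have "successively (\<lambda>x y. ltgt x = lsrc y) (inv_letters ms)"
    using is_stringD(4)[OF assms(1)] by (rule successively_inv_lettersI) simp
  then have "successively (\<lambda>x y. ltgt x = lsrc y) w"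
    using assms(2) by (simp add: successively_append_iff)
  then show "successively (\<lambda>\<alpha> \<beta>. atgt \<alpha> = asrc \<beta>) (map fst w)"
    using assms(3) by (rule successively_map_fst_direct)
next
  assume "w \<noteq> []"
  then have "ms \<noteq> []" using assms(2) unfolding inv_letters_def by auto
  then have "hd w = flip (last ms)" "endv u ms = ltgt (last ms)"
    using assms(2) \<open>w \<noteq> []\<close> hd_inv_letters[of ms] endv_eq_ltgt_last[of ms u] by auto
  moreover have "snd (hd w)" using assms(3) \<open>w \<noteq> []\<close> by simp
  then have "asrc (fst (hd w)) = lsrc (hd w)" by (simp add: lsrc_def)
  ultimately show "asrc (hd (map fst w)) = endv u ms"
    using \<open>w \<noteq> []\<close> by (simp add: hd_map)
next
  show "fst ` set w \<subseteq> fst ` set ms"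
  proof
    fix z assume "z \<in> fst ` set w"
    then obtain x where "x \<in> set w" "z = fst x" by blast
    then have "x \<in> set (inv_letters ms)" "z = fst x" using assms(2) by simp_all
    then obtain y where "y \<in> set ms" "z = fst y" unfolding set_inv_letters by auto
    then show "z \<in> fst ` set ms" by simp
  qed
qed

section \<open>Non-crossing arcs\<close>

lemma nested_if_not_crosses:
  assumes "\<not> crosses Y Z" "\<not> crosses Z Y"
    and "fst Y \<le> p" "p \<le> fst Y + snd Y - 1" "fst Z \<le> p" "p \<le> fst Z + snd Z - 1"
    and "snd Y \<le> snd Z"
  shows "fst Z \<le> fst Y \<and> fst Y + snd Y \<le> fst Z + snd Z"
  using assms unfolding crosses_def by linarith

text \<open>The arc G spanning the gap between the end of A and the end of B crosses no arc M
  compatible with A and B, unless M meets the arcs [c, c+d-1] or [c+2, c+d+1] (the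
  supports of R^T and R^D of X = (c,d)) more than A resp. B does.\<close>

lemma gap_arc_not_crosses:
  fixes A B M :: obj and c d :: int
  defines "G \<equiv> (fst A + snd A + 1, fst B + snd B - fst A - snd A - 1)"
  assumes A: "fst A \<le> c" "c \<le> fst A + snd A - 1" "fst A + snd A - c \<le> d"
    and B: "c + 2 \<le> fst B" "fst B \<le> c + d + 1" "c + d + 1 \<le> fst B + snd B - 1"
    and gap: "fst B > fst A + snd A + 1"
    and M: "1 \<le> snd M"
    and MA: "\<not> crosses M A" "\<not> crosses A M" and MB: "\<not> crosses M B" "\<not> crosses B M"
    and RT_bound: "fst M \<le> c \<and> c \<le> fst M + snd M - 1 \<and> fst M + snd M - c \<le> d \<Longrightarrow> snd M \<le> snd A"
    and RD_bound: "c + 2 \<le> fst M \<and> fst M \<le> c + d + 1 \<and> c + d + 1 \<le> fst M + snd M - 1 \<Longrightarrow>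
      snd M \<le> snd B"
  shows "\<not> crosses G M \<and> \<not> crosses M G"
proof
  show "\<not> crosses G M"
  proof
    assume "crosses G M"
    then have h: "fst A + snd A + 1 < fst M" "fst M \<le> fst B + snd B" "fst B + snd B \<le> fst M + snd M - 1"
      unfolding crosses_def G_def by auto
    show False
    proof (cases "fst M > fst B")
      case True
      then have "crosses B M" using h unfolding crosses_def by auto
      then show False using MB by simp
    next
      case False
      then have "snd M \<le> snd B" using h A B by (intro RD_bound) linarith
      then show False using False h by linarith
    qed
  qed
  show "\<not> crosses M G"
  proof
    assume "crosses M G"
    then have h: "fst M < fst A + snd A + 1" "fst A + snd A + 1 \<le> fst M + snd M"
      "fst M + snd M \<le> fst B + snd B - 1"
      unfolding crosses_def G_def by auto
    consider "fst M > fst A" | "fst M \<le> fst A" "fst B \<le> fst M + snd M"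
      | "fst M \<le> fst A" "fst M + snd M < fst B" by linarith
    then show False
    proof cases
      case 1
      then have "crosses A M" using h unfolding crosses_def by auto
      then show False using MA by simp
    next
      case 2
      then have "crosses M B" using h A B unfolding crosses_def by auto
      then show False using MB by simp
    next
      case 3
      then have "snd M \<le> snd A" using h A B by (intro RT_bound) linarith
      then show False using 3 h by linarith
    qed
  qed
qed

lemma is_topD:
  assumes "is_top n T R i"
  shows "i \<in> {1..n-1}" "T i \<in> R" "\<And>k. k \<in> {1..n-1} \<Longrightarrow> T k \<in> R \<Longrightarrow> snd (T k) \<le> snd (T i)"
  using assms unfolding is_top_def by auto

locale max_rigid_tube =
  fixes n :: nat and T :: "nat \<Rightarrow> obj"
  assumes two_le_n: "2 \<le> n"
    and inj_T: "inj_on T {1..n-1}"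
    and max_rigid_T: "max_rigid n (T ` {1..n-1})"
    and T_1: "T 1 = (1, int n - 1)"
begin

lemma n_pos: "n > 0"
  using two_le_n by simp

lemma one_mem: "1 \<in> {1..n-1}"
  using two_le_n by simp

lemma not_ext1_nz_T: "k \<in> {1..n-1} \<Longrightarrow> k' \<in> {1..n-1} \<Longrightarrow> \<not> ext1_nz n (T k) (T k')"
  using max_rigid_T unfolding max_rigid_def rigid_def by blast

text \<open>A summand of quasilength \<ge> n would have self-extensions; one leaving the wing of
  T_1 would cross T_1.\<close>

lemma T_in_wing:
  assumes k: "k \<in> {1..n-1}"
  shows "in_wing n (T k)"
proof -
  define a b where "a = fst (T k)" and "b = snd (T k)"
  have ab: "1 \<le> a" "a \<le> int n" "1 \<le> b"
    using max_rigid_T k unfolding max_rigid_def valid_def a_def b_def by auto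
  have "b \<le> int n - 1"
  proof (rule ccontr)
    assume "\<not> b \<le> int n - 1"
    define l where "l = b mod int n + 1"
    have "0 \<le> b mod int n" "b mod int n < int n" using n_pos by simp_all
    moreover have "a + b - l - (a - 1) = int n * (b div int n)"
      unfolding l_def by (simp add: minus_mod_eq_mult_div)
    then have "[a + b - l = a - 1] (mod int n)" by (simp add: cong_iff_dvd_diff)
    ultimately have "ext1_nz n (T k) (T k)"
      unfolding ext1_nz_iff[OF n_pos] a_def[symmetric] b_def[symmetric]
      using \<open>\<not> b \<le> int n - 1\<close> by (intro exI[of _ l]) (auto simp: l_def)
    then show False using not_ext1_nz_T k by blast
  qed
  moreover have "a + b \<le> int n"
  proof (rule ccontr)
    assume "\<not> a + b \<le> int n"
    then have "1 \<le> int n + 1 - a" "int n + 1 - a \<le> int n - 1" "int n + 1 - a \<le> b"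
      using \<open>b \<le> int n - 1\<close> ab by auto
    moreover have "[1 + (int n - 1) - (int n + 1 - a) = a - 1] (mod int n)" by simp
    ultimately have "ext1_nz n (T 1) (T k)"
      unfolding ext1_nz_iff[OF n_pos] T_1 a_def[symmetric] b_def[symmetric]
      by (intro exI[of _ "int n + 1 - a"]) auto
    then show False using not_ext1_nz_T one_mem k by blast
  qed
  ultimately show ?thesis using ab unfolding in_wing_def a_def b_def by simp
qed

lemma T_not_crosses: "k \<in> {1..n-1} \<Longrightarrow> k' \<in> {1..n-1} \<Longrightarrow> \<not> crosses (T k) (T k')"
  using not_ext1_nz_T ext1_nz_wing_iff_crosses[OF n_pos T_in_wing T_in_wing] by blast

lemma in_T_if_not_crosses:
  assumes G: "in_wing n G" and nc: "\<And>k. k \<in> {1..n-1} \<Longrightarrow> \<not> crosses G (T k) \<and> \<not> crosses (T k) G"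
  shows "G \<in> T ` {1..n-1}"
proof -
  have "\<not> ext1_nz n Y Z" if "Y \<in> T ` {1..n-1} \<union> {G}" "Z \<in> T ` {1..n-1} \<union> {G}" for Y Z
  proof -
    have wings: "in_wing n Y" "in_wing n Z" using that G T_in_wing by auto
    have "\<not> crosses Y Z"
      using that nc T_not_crosses by (auto simp: crosses_def)
    moreover have "\<not> crosses Z Y"
      using that nc T_not_crosses by (auto simp: crosses_def)
    ultimately show ?thesis using ext1_nz_wing_iff_crosses[OF n_pos wings] by blast
  qed
  then have "rigid n (T ` {1..n-1} \<union> {G})" unfolding rigid_def by blast
  then show ?thesis
    using max_rigid_T in_wing_valid[OF G] unfolding max_rigid_def by blast
qed

lemma eq_1_if_long:
  assumes k: "k \<in> {1..n-1}" and long: "snd (T k) \<ge> int n - 1"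
  shows "k = 1"
proof -
  have "T k = T 1"
    using T_in_wing[OF k] long T_1 unfolding in_wing_def by (intro prod_eqI) auto
  then show ?thesis using inj_T k one_mem unfolding inj_on_def by blast
qed

section \<open>The summands of maximal quasilength in R^T(X) and R^D(X)\<close>

lemma T_mem_RT_iff: "k \<in> {1..n-1} \<Longrightarrow> T k \<in> RT n X \<longleftrightarrow> BT n (T k) X \<noteq> {}"
  unfolding RT_def using T_in_wing in_wing_valid by blast

lemma T_mem_RD_iff: "k \<in> {1..n-1} \<Longrightarrow> T k \<in> RD n X \<longleftrightarrow> BD n (T k) X \<noteq> {}"
  unfolding RD_def using T_in_wing in_wing_valid by blast

lemma T_mem_RT_covers:
  assumes "valid n X" "k \<in> {1..n-1}" "T k \<in> RT n X"
  shows "fst (T k) \<le> fst X \<and> fst X \<le> fst (T k) + snd (T k) - 1"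
  using BT_from_wing_nonempty_iff[OF T_in_wing[OF assms(2)], of X] T_mem_RT_iff[OF assms(2)] assms
  unfolding valid_def by auto

lemma T_mem_RD_overlap:
  assumes "k \<in> {1..n-1}" "k' \<in> {1..n-1}" "T k \<in> RD n X" "T k' \<in> RD n X"
  shows "\<exists>p. fst (T k) \<le> p \<and> p \<le> fst (T k) + snd (T k) - 1 \<and>
    fst (T k') \<le> p \<and> p \<le> fst (T k') + snd (T k') - 1"
  using BD_from_wing_common_point[OF n_pos T_in_wing[OF assms(1)] T_in_wing[OF assms(2)]]
    T_mem_RD_iff assms by auto

lemma RT_nested_in_top:
  assumes "valid n X" "is_top n T (RT n X) i" "k \<in> {1..n-1}" "T k \<in> RT n X"
  shows "fst (T i) \<le> fst (T k) \<and> fst (T k) + snd (T k) \<le> fst (T i) + snd (T i)"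
  using nested_if_not_crosses[OF T_not_crosses T_not_crosses] is_topD[OF assms(2)] assms(3,4)
    T_mem_RT_covers[OF assms(1)] by (metis (no_types, lifting))

lemma RD_nested_in_top:
  assumes "is_top n T (RD n X) j" "k \<in> {1..n-1}" "T k \<in> RD n X"
  shows "fst (T j) \<le> fst (T k) \<and> fst (T k) + snd (T k) \<le> fst (T j) + snd (T j)"
proof -
  note j = is_topD[OF assms(1)]
  obtain p where "fst (T k) \<le> p \<and> p \<le> fst (T k) + snd (T k) - 1 \<and>
      fst (T j) \<le> p \<and> p \<le> fst (T j) + snd (T j) - 1"
    using T_mem_RD_overlap[OF assms(2) j(1) assms(3) j(2)] by blast
  then show ?thesis
    using nested_if_not_crosses[OF T_not_crosses[OF assms(2) j(1)] T_not_crosses[OF j(1) assms(2)]]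
      j(3)[OF assms(2,3)] by blast
qed

lemma T1_mem_RT_if_wraps:
  assumes "valid n X" "int n \<le> fst X + snd X" "fst X \<le> int n - 1"
  shows "T 1 \<in> RT n X"
  using BT_from_wing_nonempty_iff[OF T_in_wing[OF one_mem], of X] T_mem_RT_iff[OF one_mem] assms
  unfolding T_1 valid_def by auto

text \<open>The index of the D-map T_1 \<rightarrow> X is (c + d) mod n + 1; it stays below n because
  otherwise c + d + 1 \<equiv> 0, which no nonzero D-map T_k \<rightarrow> X allows.\<close>

lemma T1_mem_RD_if_wraps:
  assumes X: "valid n X" "int n \<le> fst X + snd X" "fst X \<le> int n - 1"
    and k: "k \<in> {1..n-1}" "T k \<in> RD n X"
  shows "T 1 \<in> RD n X"
proof -
  define c d where "c = fst X" and "d = snd X"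
  have cd: "1 \<le> c" "c \<le> int n - 1" "1 \<le> d" "int n \<le> c + d"
    using X unfolding valid_def c_def d_def by auto
  obtain l' where l': "1 \<le> l'" "l' \<le> snd (T k)" "l' \<le> d" "[c + 2 + d - l' = fst (T k)] (mod int n)"
  proof -
    obtain l where "l \<in> BD n (T k) X" using k T_mem_RD_iff by blast
    then show ?thesis using that mem_BD_iff[OF n_pos] unfolding c_def d_def by auto
  qed
  define l where "l = (c + d) mod int n + 1"
  have mod_bounds: "0 \<le> (c + d) mod int n" "(c + d) mod int n < int n" using n_pos by auto
  have div: "c + d = int n * ((c + d) div int n) + (c + d) mod int n" by simp
  have "c + 2 + d - l - 1 = int n * ((c + d) div int n)" using div unfolding l_def by linarith
  then have "[c + 2 + d - l = 1] (mod int n)" by (simp add: cong_iff_dvd_diff)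
  moreover have "l \<le> int n - 1"
  proof (rule ccontr)
    assume "\<not> l \<le> int n - 1"
    then have "(c + d) mod int n = int n - 1" using mod_bounds unfolding l_def by simp
    then have "c + d + 1 = int n * ((c + d) div int n) + int n" using div by linarith
    then have "c + d + 1 = int n * ((c + d) div int n + 1)" by (simp add: algebra_simps)
    then have "[c + d + 1 = 0] (mod int n)" unfolding cong_iff_dvd_diff by simp
    moreover have "[c + d + 1 = fst (T k) + l' - 1] (mod int n)"
      using cong_add[OF l'(4) cong_refl[of "l' - 1"]] by (simp add: algebra_simps)
    ultimately have "[fst (T k) + l' - 1 = 0] (mod int n)" by (metis cong_sym cong_trans)
    then have "fst (T k) + l' - 1 = 0"
      using T_in_wing[OF k(1)] l' unfolding in_wing_def
      by (intro cong_eq_if_abs_diff_less[of _ _ n]) auto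
    then show False using T_in_wing[OF k(1)] l' unfolding in_wing_def by simp
  qed
  moreover have "l \<le> d"
  proof (cases "d \<ge> int n")
    case False
    have "(c + d) mod int n = (c + d - int n) mod int n"
      by (simp add: mod_diff_right_eq[symmetric])
    also have "\<dots> = c + d - int n" using False cd by (intro mod_pos_pos_trivial) auto
    finally show ?thesis using cd unfolding l_def by simp
  qed (use mod_bounds l_def in simp)
  moreover have "1 \<le> l" using mod_bounds unfolding l_def by simp
  ultimately have "l \<in> BD n (T 1) X" using mem_BD_iff[OF n_pos] T_1 unfolding c_def d_def by auto
  then show ?thesis using T_mem_RD_iff[OF one_mem] by auto
qed

lemma tops_eq_1_if_wraps:
  assumes X: "valid n X" "int n \<le> fst X + snd X"
    and i: "is_top n T (RT n X) i" and j: "is_top n T (RD n X) j"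
  shows "i = 1 \<and> j = 1"
proof -
  note i = is_topD[OF i] and j = is_topD[OF j]
  have "fst X \<le> fst (T i) + snd (T i) - 1" using T_mem_RT_covers[OF X(1) i(1,2)] by simp
  then have "fst X \<le> int n - 1" using T_in_wing[OF i(1)] unfolding in_wing_def by simp
  then have "snd (T 1) \<le> snd (T i)" "snd (T 1) \<le> snd (T j)"
    using i(3) j(3) one_mem T1_mem_RT_if_wraps[OF X] T1_mem_RD_if_wraps[OF X _ j(1,2)] by auto
  then show ?thesis using eq_1_if_long i(1) j(1) T_1 by simp
qed

text \<open>A gap between the tops could be filled by a further summand, contradicting the
  choice of the top of R^D(X).\<close>

lemma top_RD_starts_after_top_RT:
  assumes X: "valid n X" "fst X + snd X \<le> int n - 1"
    and i: "is_top n T (RT n X) i" and j: "is_top n T (RD n X) j"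
  shows "fst (T j) = fst (T i) + snd (T i) + 1"
proof -
  define c d where "c = fst X" and "d = snd X"
  have cd: "1 \<le> c" "1 \<le> d" "c + d \<le> int n - 1" using X unfolding valid_def c_def d_def by auto
  note i = is_topD[OF i] and j = is_topD[OF j]
  define A B where "A = T i" and "B = T j"
  have wings: "in_wing n A" "in_wing n B" unfolding A_def B_def using T_in_wing i(1) j(1) by auto
  have RT_iff: "BT n (T k) X \<noteq> {} \<longleftrightarrow>
      fst (T k) \<le> c \<and> c \<le> fst (T k) + snd (T k) - 1 \<and> fst (T k) + snd (T k) - c \<le> d"
    if "k \<in> {1..n-1}" for k
    using BT_from_wing_nonempty_iff[OF T_in_wing[OF that], of X] X unfolding valid_def c_def d_def by auto
  have RD_iff: "BD n Y X \<noteq> {} \<longleftrightarrow>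
      c + 2 \<le> fst Y \<and> fst Y \<le> c + d + 1 \<and> c + d + 1 \<le> fst Y + snd Y - 1"
    if "in_wing n Y" for Y
    using BD_from_wing_nonempty_iff[OF n_pos that, of X] cd unfolding c_def d_def by auto
  have A: "fst A \<le> c" "c \<le> fst A + snd A - 1" "fst A + snd A - c \<le> d"
    using RT_iff[OF i(1)] i(2) T_mem_RT_iff[OF i(1)] unfolding A_def by auto
  have B: "c + 2 \<le> fst B" "fst B \<le> c + d + 1" "c + d + 1 \<le> fst B + snd B - 1"
    using RD_iff[OF wings(2)] j(2) T_mem_RD_iff[OF j(1)] unfolding B_def by auto
  have "fst B \<ge> fst A + snd A + 1"
    using T_not_crosses[OF i(1) j(1)] A B unfolding crosses_def A_def B_def by linarith
  moreover have "\<not> fst B > fst A + snd A + 1"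
  proof
    assume gap: "fst B > fst A + snd A + 1"
    define G where "G = (fst A + snd A + 1, fst B + snd B - fst A - snd A - 1)"
    have wG: "in_wing n G" using A B wings unfolding G_def in_wing_def by auto
    have "\<not> crosses G (T k) \<and> \<not> crosses (T k) G" if k: "k \<in> {1..n-1}" for k
      unfolding G_def
    proof (rule gap_arc_not_crosses[OF A B gap])
      show "1 \<le> snd (T k)" using T_in_wing[OF k] unfolding in_wing_def by simp
      show "\<not> crosses (T k) A" "\<not> crosses A (T k)" "\<not> crosses (T k) B" "\<not> crosses B (T k)"
        unfolding A_def B_def using T_not_crosses k i(1) j(1) by auto
      show "snd (T k) \<le> snd A"
        if "fst (T k) \<le> c \<and> c \<le> fst (T k) + snd (T k) - 1 \<and> fst (T k) + snd (T k) - c \<le> d"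
        using that RT_iff[OF k] i(3)[OF k] T_mem_RT_iff[OF k] unfolding A_def by auto
      show "snd (T k) \<le> snd B"
        if "c + 2 \<le> fst (T k) \<and> fst (T k) \<le> c + d + 1 \<and> c + d + 1 \<le> fst (T k) + snd (T k) - 1"
        using that RD_iff[OF T_in_wing[OF k]] j(3)[OF k] T_mem_RD_iff[OF k] unfolding B_def by auto
    qed
    then obtain m where m: "m \<in> {1..n-1}" "T m = G" using in_T_if_not_crosses[OF wG] by blast
    have "BD n G X \<noteq> {}" using RD_iff[OF wG] A B unfolding G_def by auto
    then have "snd G \<le> snd B" using j(3)[OF m(1)] T_mem_RD_iff[OF m(1)] m(2) unfolding B_def by auto
    then show False using gap unfolding G_def by simp
  qed
  ultimately show ?thesis unfolding A_def B_def by simp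
qed

lemma tops_adjacent:
  assumes X: "valid n X" and i: "is_top n T (RT n X) i" and j: "is_top n T (RD n X) j"
  shows "[fst (T i) + snd (T i) + 1 = fst (T j)] (mod int n)"
proof (cases "fst X + snd X \<ge> int n")
  case True
  then show ?thesis using tops_eq_1_if_wraps[OF X True i j] T_1 by (simp add: cong_def)
next
  case False
  then show ?thesis using top_RD_starts_after_top_RT[OF X _ i j] by simp
qed

lemma one_mem_BD_top_RD_top_RT:
  assumes X: "valid n X" and i: "is_top n T (RT n X) i" and j: "is_top n T (RD n X) j"
  shows "1 \<in> BD n (T j) (T i)"
  using one_mem_BD_iff[OF n_pos] tops_adjacent[OF assms] T_in_wing is_topD(1)[OF i] is_topD(1)[OF j]
  unfolding in_wing_def by auto

section \<open>The arrow beta\<close>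

lemma BD_T_eq_1:
  assumes k: "k \<in> {1..n-1}" and k': "k' \<in> {1..n-1}" and q: "q \<in> BD n (T k) (T k')"
  shows "q = 1"
proof (rule ccontr)
  assume "q \<noteq> 1"
  moreover have "1 \<le> q" "q \<le> snd (T k')" "q \<le> snd (T k)" using q mem_BD_iff[OF n_pos] by auto
  ultimately have "fst (T k) = fst (T k') + snd (T k') + 2 - q"
    using mem_BD_wing_cases[OF n_pos T_in_wing[OF k] T_in_wing[OF k'] q] by auto
  then have "crosses (T k') (T k)"
    using \<open>q \<noteq> 1\<close> \<open>1 \<le> q\<close> \<open>q \<le> snd (T k')\<close> \<open>q \<le> snd (T k)\<close>
    unfolding crosses_def by auto
  then show False using T_not_crosses[OF k' k] by simp
qed

lemma bmor_D_arrow: "bmor (i, j, DK, x) = eD x"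
  by (simp add: bmor_eq akind_def idx_def)

text \<open>A composite through T_m of a T-map and a D-map reaches the D-basis map of index 1
  only through the identity index, and then T_m is the top itself, since it would
  otherwise be a longer summand of R^D(X) resp. R^T(X).\<close>

lemma factor_through_top_RD:
  assumes j: "is_top n T (RD n X) j" and i: "i \<in> {1..n-1}" and m: "m \<in> {1..n-1}"
    and l: "l \<in> BT n (T j) (T m)" and q: "q \<in> BD n (T m) (T i)" and eq: "1 = q - l + snd (T j)"
  shows "T m = T j \<and> l = snd (T j)"
proof -
  note j = is_topD[OF j]
  have "q = 1" using BD_T_eq_1[OF m i q] .
  moreover have "l = fst (T j) + snd (T j) - fst (T m)" "fst (T j) + snd (T j) \<le> fst (T m) + snd (T m)"
    using mem_BT_wing_iff[OF T_in_wing[OF j(1)] T_in_wing[OF m]] l by auto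
  ultimately have same_start: "fst (T m) = fst (T j)" "snd (T j) \<le> snd (T m)" using eq by auto
  moreover have "BD n (T j) X \<noteq> {}" using j(2) T_mem_RD_iff[OF j(1)] by simp
  ultimately have "BD n (T m) X \<noteq> {}" using BD_nonempty_mono[OF n_pos] by simp
  then have "snd (T m) \<le> snd (T j)" using j(3)[OF m] T_mem_RD_iff[OF m] by auto
  then show ?thesis using same_start \<open>q = 1\<close> eq by (auto intro: prod_eqI)
qed

lemma factor_through_top_RT:
  assumes i: "is_top n T (RT n X) i" and j: "j \<in> {1..n-1}" and m: "m \<in> {1..n-1}"
    and q: "q \<in> BD n (T j) (T m)" and l: "l \<in> BT n (T m) (T i)" and eq: "1 = q - l + snd (T i)"
  shows "T m = T i \<and> l = snd (T i)"
proof -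
  note i = is_topD[OF i]
  have "q = 1" using BD_T_eq_1[OF j m q] .
  moreover have "l = fst (T m) + snd (T m) - fst (T i)" "fst (T m) \<le> fst (T i)"
    using mem_BT_wing_iff[OF T_in_wing[OF m] T_in_wing[OF i(1)]] l by auto
  ultimately have same_end: "fst (T m) + snd (T m) = fst (T i) + snd (T i)" "snd (T i) \<le> snd (T m)"
    using eq by auto
  moreover have "BT n (T i) X \<noteq> {}" using i(2) T_mem_RT_iff[OF i(1)] by simp
  ultimately have "BT n (T m) X \<noteq> {}" using BT_nonempty_mono by simp
  then have "snd (T m) \<le> snd (T i)" using i(3)[OF m] T_mem_RT_iff[OF m] by auto
  then show ?thesis using same_end \<open>q = 1\<close> eq by (auto intro: prod_eqI)
qed

text \<open>Every composite of radical maps T_j \<rightarrow> T_m \<rightarrow> T_i has D-coefficient 0 at index 1,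
  because the identity coefficient of a radical endomorphism vanishes.\<close>

lemma is_arrow_beta:
  assumes X: "valid n X" and i: "is_top n T (RT n X) i" and j: "is_top n T (RD n X) j"
  shows "is_arrow (K::'k::field itself) n T (i, j, DK, 1)"
proof -
  note i' = is_topD[OF i] and j' = is_topD[OF j]
  have one: "1 \<in> BD n (T j) (T i)" using one_mem_BD_top_RD_top_RT[OF X i j] .
  have D_part_zero: "snd (comp n (T j) (T m) (T i) g h) 1 = (0::'k)"
    if m: "m \<in> {1..n-1}" and h: "h \<in> rad K n (T j) (T m)" and g: "g \<in> rad K n (T m) (T i)" for m h g
  proof -
    have h0: "fst h l = 0"
      if "l \<in> BT n (T j) (T m)" "q \<in> BD n (T m) (T i)" "q - l + snd (T j) = 1" for l q
    proof -
      have "T m = T j" "l = snd (T j)"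
        using factor_through_top_RD[OF j i'(1) m that(1,2) that(3)[symmetric]] by auto
      then show ?thesis using h rad_endo_coeff_self_zero[OF T_in_wing[OF j'(1)]] by simp
    qed
    have g0: "fst g l = 0"
      if "q \<in> BD n (T j) (T m)" "l \<in> BT n (T m) (T i)" "q - l + snd (T i) = 1" for q l
    proof -
      have "T m = T i" "l = snd (T i)"
        using factor_through_top_RT[OF i j'(1) m that(1,2) that(3)[symmetric]] by auto
      then show ?thesis using g rad_endo_coeff_self_zero[OF T_in_wing[OF i'(1)]] by simp
    qed
    show ?thesis unfolding snd_comp by (simp add: sum.neutral h0 g0)
  qed
  have "(eD 1 :: 'k mor) \<notin> rad2 K n T (T j) (T i)"
  proof
    assume "(eD 1 :: 'k mor) \<in> rad2 K n T (T j) (T i)"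
    then have "snd (eD 1 :: 'k mor) 1 = 0" using rad2_snd_eq_zero[where x=1] D_part_zero by blast
    then show False by simp
  qed
  then show ?thesis
    unfolding is_arrow_def asrc_def atgt_def bmor_D_arrow using i'(1) j'(1) eD_in_rad[OF one] by simp
qed

section \<open>The letters of sigma^T_X and sigma^D_X are T-arrows\<close>

lemma D_map_into_T1_in_rad2:
  assumes q: "q \<in> {1..n-1}" "q \<noteq> 1" and start: "fst (T q) = 1"
  shows "(eD 1 :: 'k::field mor) \<in> rad2 K n T (T q) (T 1)"
proof -
  have wq: "in_wing n (T q)" using T_in_wing[OF q(1)] .
  have BT: "snd (T q) \<in> BT n (T q) (T 1)"
    using mem_BT_wing_iff[OF wq T_in_wing[OF one_mem]] wq start T_1 unfolding in_wing_def by auto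
  have BD11: "1 \<in> BD n (T 1) (T 1)" using one_mem_BD_iff[OF n_pos] T_1 two_le_n by (simp add: cong_def)
  have "1 \<in> BD n (T q) (T 1)"
    using one_mem_BD_iff[OF n_pos] wq start T_1 two_le_n unfolding in_wing_def by (simp add: cong_def)
  then have "comp n (T q) (T 1) (T 1) (eD 1) (eT (snd (T q))) = (eD 1 :: 'k mor)"
    using comp_eD_eT[OF BT BD11] by simp
  moreover have "T q \<noteq> T 1" using inj_T q one_mem unfolding inj_on_def by blast
  then have "(eT (snd (T q)) :: 'k mor) \<in> rad K n (T q) (T 1)"
    using eT_in_rad[OF wq T_in_wing[OF one_mem] BT] by auto
  then have "madd (comp n (T q) (T 1) (T 1) (eD 1) (eT (snd (T q)))) zmor \<in> rad2 K n T (T q) (T 1)"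
    by (rule rad2.add[where T=T and m=1, OF one_mem _ eD_in_rad[OF BD11] rad2.zero])
  ultimately show ?thesis by (simp add: madd_zmor)
qed

lemma D_map_from_T1_in_rad2:
  assumes p: "p \<in> {1..n-1}" "p \<noteq> 1" and stop: "fst (T p) + snd (T p) = int n"
  shows "(eD 1 :: 'k::field mor) \<in> rad2 K n T (T 1) (T p)"
proof -
  have wp: "in_wing n (T p)" using T_in_wing[OF p(1)] .
  have BT: "int n - fst (T p) \<in> BT n (T 1) (T p)"
    using mem_BT_wing_iff[OF T_in_wing[OF one_mem] wp] wp stop T_1 unfolding in_wing_def by auto
  have BD11: "1 \<in> BD n (T 1) (T 1)" using one_mem_BD_iff[OF n_pos] T_1 two_le_n by (simp add: cong_def)
  have "1 \<in> BD n (T 1) (T p)"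
    using one_mem_BD_iff[OF n_pos] wp stop T_1 two_le_n unfolding in_wing_def by (simp add: cong_def)
  moreover have idx: "1 - (int n - fst (T p)) + snd (T p) = 1" using stop by simp
  ultimately have "comp n (T 1) (T 1) (T p) (eT (int n - fst (T p))) (eD 1) = (eD 1 :: 'k mor)"
    using comp_eT_eD[OF BD11 BT] unfolding idx by simp
  moreover have "T 1 \<noteq> T p" using inj_T p one_mem unfolding inj_on_def by blast
  then have "(eT (int n - fst (T p)) :: 'k mor) \<in> rad K n (T 1) (T p)"
    using eT_in_rad[OF T_in_wing[OF one_mem] wp BT] by auto
  then have "madd (comp n (T 1) (T 1) (T p) (eT (int n - fst (T p))) (eD 1)) zmor \<in>
      rad2 K n T (T 1) (T p)"
    by (rule rad2.add[where T=T and m=1, OF one_mem eD_in_rad[OF BD11] _ rad2.zero])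
  ultimately show ?thesis by (simp add: madd_zmor)
qed

text \<open>A D-map between distinct overlapping summands has index 1 and connects an arc ending
  at n with an arc starting at 1; the longer of the two is then T_1, through which the map
  factors.\<close>

lemma no_D_arrow_between_overlapping:
  assumes a: "is_arrow (K::'k::field itself) n T a" "akind a = DK"
    and p: "asrc a \<in> {1..n-1}" and q: "atgt a \<in> {1..n-1}" and pq: "asrc a \<noteq> atgt a"
    and overlap: "fst (T (atgt a)) \<le> x" "x \<le> fst (T (atgt a)) + snd (T (atgt a)) - 1"
      "fst (T (asrc a)) \<le> x" "x \<le> fst (T (asrc a)) + snd (T (asrc a)) - 1"
  shows False
proof -
  define p' q' where "p' = asrc a" and "q' = atgt a"
  have wp: "in_wing n (T p')" and wq: "in_wing n (T q')"
    using T_in_wing p q unfolding p'_def q'_def by auto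
  have idx: "idx a \<in> BD n (T q') (T p')" using D_arrow_idx_mem_BD[OF a] unfolding p'_def q'_def .
  then have "idx a = 1" using BD_T_eq_1 p q unfolding p'_def q'_def by blast
  have ends: "fst (T q') = 1" "fst (T p') + snd (T p') = int n"
    using mem_BD_wing_cases[OF n_pos wq wp idx] \<open>idx a = 1\<close> overlap unfolding p'_def q'_def by auto
  have not_rad2: "(eD 1 :: 'k mor) \<notin> rad2 K n T (T q') (T p')"
    using a \<open>idx a = 1\<close> unfolding is_arrow_def p'_def q'_def by (simp add: bmor_eq)
  have nc: "\<not> crosses (T p') (T q')" "\<not> crosses (T q') (T p')"
    using T_not_crosses p q unfolding p'_def q'_def by auto
  show False
  proof (cases "snd (T q') \<le> snd (T p')")
    case True
    then have "fst (T p') \<le> fst (T q')" using nested_if_not_crosses[OF nc(2,1)] overlap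
      unfolding p'_def q'_def by blast
    then have "p' = 1" using eq_1_if_long p ends wp unfolding p'_def in_wing_def by auto
    then show False using D_map_into_T1_in_rad2 q pq ends not_rad2 unfolding p'_def q'_def by metis
  next
    case False
    then have "fst (T p') + snd (T p') \<le> fst (T q') + snd (T q')"
      using nested_if_not_crosses[OF nc] overlap unfolding p'_def q'_def by auto
    then have "q' = 1" using eq_1_if_long q ends unfolding q'_def by auto
    then show False using D_map_from_T1_in_rad2 p pq ends not_rad2 unfolding p'_def q'_def by metis
  qed
qed

lemma sigma_letter_T_arrow:
  assumes sg: "is_sigma (K::'k::field itself) n T R v ls" and x: "x \<in> set ls"
    and overlap: "\<And>u w. u \<in> {1..n-1} \<Longrightarrow> w \<in> {1..n-1} \<Longrightarrow> T u \<in> R \<Longrightarrow> T w \<in> R \<Longrightarrow>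
        \<exists>p. fst (T u) \<le> p \<and> p \<le> fst (T u) + snd (T u) - 1 \<and>
          fst (T w) \<le> p \<and> p \<le> fst (T w) + snd (T w) - 1"
  shows "akind (fst x) = TK"
proof (rule ccontr)
  assume "akind (fst x) \<noteq> TK"
  then have D: "akind (fst x) = DK" by (cases "akind (fst x)") auto
  have ar: "is_arrow K n T (fst x)" using sg x unfolding is_sigma_def is_string_def by auto
  note ends = sigma_letter_endpoints[OF sg x]
  obtain p where "fst (T (atgt (fst x))) \<le> p \<and> p \<le> fst (T (atgt (fst x))) + snd (T (atgt (fst x))) - 1 \<and>
      fst (T (asrc (fst x))) \<le> p \<and> p \<le> fst (T (asrc (fst x))) + snd (T (asrc (fst x))) - 1"
    using overlap ends(1,2) by blast
  then show False using no_D_arrow_between_overlapping[OF ar D] ends by blast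
qed

lemma RT_sigma_letter:
  assumes X: "valid n X" and sg: "is_sigma (K::'k::field itself) n T (RT n X) v ls" and x: "x \<in> set ls"
  shows "is_arrow K n T (fst x) \<and> akind (fst x) = TK \<and> T (asrc (fst x)) \<in> RT n X"
proof -
  have "akind (fst x) = TK"
    using sigma_letter_T_arrow[OF sg x] T_mem_RT_covers[OF X] by blast
  then show ?thesis
    using sg x sigma_letter_endpoints(1)[OF sg x] unfolding is_sigma_def is_string_def by auto
qed

lemma RD_sigma_letter:
  assumes sg: "is_sigma (K::'k::field itself) n T (RD n X) v ls" and x: "x \<in> set ls"
  shows "is_arrow K n T (fst x) \<and> akind (fst x) = TK \<and> T (atgt (fst x)) \<in> RD n X"
proof -
  have "akind (fst x) = TK"
    using sigma_letter_T_arrow[OF sg x] T_mem_RD_overlap by blast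
  then show ?thesis
    using sg x sigma_letter_endpoints(2)[OF sg x] unfolding is_sigma_def is_string_def by auto
qed

lemma T_arrow_BT:
  assumes "is_arrow (K::'k::field itself) n T a" "akind a = TK"
  shows "asrc a \<in> {1..n-1}" "atgt a \<in> {1..n-1}"
    "idx a = fst (T (atgt a)) + snd (T (atgt a)) - fst (T (asrc a))"
    "fst (T (atgt a)) \<le> fst (T (asrc a))"
    "fst (T (atgt a)) + snd (T (atgt a)) \<le> fst (T (asrc a)) + snd (T (asrc a))"
proof -
  show ends: "asrc a \<in> {1..n-1}" "atgt a \<in> {1..n-1}" using assms(1) unfolding is_arrow_def by auto
  show "idx a = fst (T (atgt a)) + snd (T (atgt a)) - fst (T (asrc a))"
    "fst (T (atgt a)) \<le> fst (T (asrc a))"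
    "fst (T (atgt a)) + snd (T (atgt a)) \<le> fst (T (asrc a)) + snd (T (asrc a))"
    using mem_BT_wing_iff[OF T_in_wing[OF ends(2)] T_in_wing[OF ends(1)]] T_arrow_idx_mem_BT[OF assms]
    by auto
qed

lemma pathmor_T_path_same_start:
  fixes K :: "'k::field itself"
  assumes "q \<noteq> []"
    and "\<forall>\<alpha>\<in>set q. is_arrow K n T \<alpha> \<and> akind \<alpha> = TK \<and> a0 \<le> fst (T (atgt \<alpha>))"
    and "successively (\<lambda>\<alpha> \<beta>. atgt \<alpha> = asrc \<beta>) q" and "fst (T (asrc (hd q))) = a0"
  shows "fst (T (atgt (last q))) = a0 \<and> snd (T (atgt (last q))) \<le> snd (T (asrc (hd q))) \<and>
    pathmor K n T q = eT (snd (T (atgt (last q))))"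
  using assms
proof (induction q)
  case Nil
  then show ?case by simp
next
  case (Cons a r)
  have a: "is_arrow K n T a" "akind a = TK" "a0 \<le> fst (T (atgt a))" using Cons.prems(2) by auto
  note bt = T_arrow_BT[OF a(1,2)]
  have same: "fst (T (atgt a)) = a0" "snd (T (atgt a)) \<le> snd (T (asrc a))"
    using bt a(3) Cons.prems(4) by auto
  have bma: "bmor a = (eT (snd (T (atgt a))) :: 'k mor)"
    using a(2) bt(3) same Cons.prems(4) by (simp add: bmor_eq)
  show ?case
  proof (cases "r = []")
    case True
    then show ?thesis using bma same by simp
  next
    case False
    define w where "w = atgt (last r)"
    have "atgt a = asrc (hd r)" "successively (\<lambda>\<alpha> \<beta>. atgt \<alpha> = asrc \<beta>) r"
      using Cons.prems(3) False by (auto simp: successively_Cons)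
    then have IH: "fst (T w) = a0" "snd (T w) \<le> snd (T (atgt a))" "pathmor K n T r = eT (snd (T w))"
      using Cons.IH[OF False] Cons.prems(2) same unfolding w_def by auto
    have "w \<in> {1..n-1}"
      using Cons.prems(2) False last_in_set[of r] unfolding w_def is_arrow_def by auto
    then have BT: "snd (T w) \<in> BT n (T w) (T (atgt a))"
      using mem_BT_wing_iff[OF T_in_wing T_in_wing[OF bt(2)]] IH same T_in_wing[OF \<open>w \<in> {1..n-1}\<close>]
      unfolding in_wing_def by auto
    have "idx a = snd (T (atgt a))" using bt(3) same(1) Cons.prems(4) by simp
    then have "comp n (T w) (T (atgt a)) (T (asrc a)) (eT (snd (T (atgt a)))) (eT (snd (T w))) =
        (eT (snd (T w)) :: 'k mor)"
      using comp_eT_eT[OF BT T_arrow_idx_mem_BT[OF a(1,2)]] T_in_wing[OF \<open>w \<in> {1..n-1}\<close>]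
      unfolding in_wing_def by simp
    then have "pathmor K n T (a # r) = eT (snd (T w))"
      using pathmor_Cons[OF False, of K n T a] bma IH(3) unfolding w_def by simp
    then show ?thesis using IH same False unfolding w_def by simp
  qed
qed

lemma pathmor_prepend_same_end:
  fixes K :: "'k::field itself"
  assumes "\<forall>\<alpha>\<in>set p. is_arrow K n T \<alpha> \<and> akind \<alpha> = TK \<and> fst (T (asrc \<alpha>)) + snd (T (asrc \<alpha>)) \<le> e"
    and "successively (\<lambda>\<alpha> \<beta>. atgt \<alpha> = asrc \<beta>) (p @ r)"
    and "r \<noteq> []" "pathmor K n T r = eD 1" "atgt (last r) \<in> {1..n-1}"
    and "fst (T (asrc (hd r))) + snd (T (asrc (hd r))) = e"
    and "[e + 1 = fst (T (atgt (last r)))] (mod int n)"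
  shows "pathmor K n T (p @ r) = eD 1"
  using assms
proof (induction p arbitrary: r rule: rev_induct)
  case Nil
  then show ?case by simp
next
  case (snoc a p)
  define s t w where "s = asrc a" and "t = atgt a" and "w = atgt (last r)"
  have a: "is_arrow K n T a" "akind a = TK" "fst (T s) + snd (T s) \<le> e"
    using snoc.prems(1) unfolding s_def by auto
  note bt = T_arrow_BT[OF a(1,2)]
  have "t = asrc (hd r)"
    using snoc.prems(2,3) unfolding t_def by (simp add: successively_append_iff successively_Cons)
  then have same_end: "fst (T s) + snd (T s) = e"
    using bt(5) a(3) snoc.prems(6) unfolding s_def t_def by simp
  have wings: "in_wing n (T w)" "in_wing n (T t)" "in_wing n (T s)"
    using T_in_wing snoc.prems(5) bt(1,2) unfolding s_def t_def w_def by auto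
  have "1 \<in> BD n (T w) (T t)" "1 \<in> BD n (T w) (T s)"
    using one_mem_BD_iff[OF n_pos] wings snoc.prems(7) same_end \<open>t = asrc (hd r)\<close> snoc.prems(6)
    unfolding w_def in_wing_def by auto
  moreover have idx: "idx a = snd (T s)"
    using bt(3) same_end \<open>t = asrc (hd r)\<close> snoc.prems(6) unfolding s_def t_def by simp
  ultimately have "comp n (T w) (T t) (T s) (eT (idx a)) (eD 1) = (eD 1 :: 'k mor)"
    using comp_eT_eD[of 1 n "T w" "T t" "idx a" "T s"] T_arrow_idx_mem_BT[OF a(1,2)]
    unfolding s_def t_def by simp
  then have "pathmor K n T (a # r) = eD 1"
    using pathmor_Cons[OF snoc.prems(3), of K n T a] snoc.prems(4) a(2)
    unfolding s_def t_def w_def by (simp add: bmor_eq)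
  moreover have "p @ a # r = (p @ [a]) @ r" by simp
  ultimately show ?case
    using snoc.IH[of "a # r"] snoc.prems same_end unfolding s_def by auto
qed

lemma pathmor_beta_Cons:
  fixes K :: "'k::field itself"
  assumes X: "valid n X" and i: "is_top n T (RT n X) i" and j: "is_top n T (RD n X) j"
    and q: "\<forall>\<alpha>\<in>set q. is_arrow K n T \<alpha> \<and> akind \<alpha> = TK \<and> T (atgt \<alpha>) \<in> RD n X"
      "successively (\<lambda>\<alpha> \<beta>. atgt \<alpha> = asrc \<beta>) q" "q \<noteq> [] \<Longrightarrow> asrc (hd q) = j"
  defines "w \<equiv> atgt (last ((i, j, DK, 1) # q))"
  shows "pathmor K n T ((i, j, DK, 1) # q) = eD 1 \<and> fst (T w) = fst (T j) \<and> w \<in> {1..n-1}"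
proof (cases "q = []")
  case True
  then show ?thesis using is_topD(1)[OF j] unfolding w_def by (simp add: bmor_D_arrow atgt_def)
next
  case False
  note i' = is_topD[OF i] and j' = is_topD[OF j]
  have w_def': "w = atgt (last q)" using False unfolding w_def by simp
  have "w \<in> {1..n-1}" using q(1) False last_in_set[of q] unfolding w_def' is_arrow_def by auto
  have "\<forall>\<alpha>\<in>set q. is_arrow K n T \<alpha> \<and> akind \<alpha> = TK \<and> fst (T j) \<le> fst (T (atgt \<alpha>))"
    using q(1) RD_nested_in_top[OF j] unfolding is_arrow_def by auto
  then have w: "fst (T w) = fst (T j)" "snd (T w) \<le> snd (T j)" "pathmor K n T q = eT (snd (T w))"
    using pathmor_T_path_same_start[OF False _ q(2)] q(3)[OF False] unfolding w_def' by auto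
  have BT: "snd (T w) \<in> BT n (T w) (T j)"
    using mem_BT_wing_iff[OF T_in_wing[OF \<open>w \<in> {1..n-1}\<close>] T_in_wing[OF j'(1)]] w
      T_in_wing[OF \<open>w \<in> {1..n-1}\<close>] unfolding in_wing_def by auto
  have "1 \<in> BD n (T w) (T i)"
    using one_mem_BD_iff[OF n_pos] tops_adjacent[OF X i j] w(1) T_in_wing[OF \<open>w \<in> {1..n-1}\<close>]
      T_in_wing[OF i'(1)] unfolding in_wing_def by auto
  then have "comp n (T w) (T j) (T i) (eD 1) (eT (snd (T w))) = (eD 1 :: 'k mor)"
    using comp_eD_eT[OF BT one_mem_BD_top_RD_top_RT[OF X i j]] by simp
  then show ?thesis
    using pathmor_Cons[OF False, of K n T "(i, j, DK, 1)"] w \<open>w \<in> {1..n-1}\<close>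
    unfolding w_def' by (simp add: bmor_D_arrow atgt_def asrc_def)
qed

lemma pathmor_through_beta:
  fixes K :: "'k::field itself"
  assumes X: "valid n X" and i: "is_top n T (RT n X) i" and j: "is_top n T (RD n X) j"
    and p: "\<forall>\<alpha>\<in>set p. is_arrow K n T \<alpha> \<and> akind \<alpha> = TK \<and> T (asrc \<alpha>) \<in> RT n X"
      "successively (\<lambda>\<alpha> \<beta>. atgt \<alpha> = asrc \<beta>) p" "p \<noteq> [] \<Longrightarrow> atgt (last p) = i"
    and q: "\<forall>\<alpha>\<in>set q. is_arrow K n T \<alpha> \<and> akind \<alpha> = TK \<and> T (atgt \<alpha>) \<in> RD n X"
      "successively (\<lambda>\<alpha> \<beta>. atgt \<alpha> = asrc \<beta>) q" "q \<noteq> [] \<Longrightarrow> asrc (hd q) = j"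
  shows "pathmor K n T (p @ (i, j, DK, 1) # q) = eD 1"
proof -
  have "successively (\<lambda>\<alpha> \<beta>. atgt \<alpha> = asrc \<beta>) (p @ (i, j, DK, 1) # q)"
    using p(2,3) q(2,3) by (auto simp: successively_append_iff successively_Cons asrc_def atgt_def)
  moreover have "\<forall>\<alpha>\<in>set p. is_arrow K n T \<alpha> \<and> akind \<alpha> = TK \<and>
      fst (T (asrc \<alpha>)) + snd (T (asrc \<alpha>)) \<le> fst (T i) + snd (T i)"
    using p(1) RT_nested_in_top[OF X i] unfolding is_arrow_def by auto
  ultimately show ?thesis
    using pathmor_prepend_same_end[of p K "fst (T i) + snd (T i)" "(i, j, DK, 1) # q"]
      pathmor_beta_Cons[OF X i j q] tops_adjacent[OF X i j] by (simp add: asrc_def)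
qed

lemma sigma_beta_sigma_is_string:
  fixes K :: "'k::field itself"
  assumes X: "valid n X" and i: "is_top n T (RT n X) i" and j: "is_top n T (RD n X) j"
    and sT: "is_sigma K n T (RT n X) vT lsT" "endv vT lsT = i"
    and sD: "is_sigma K n T (RD n X) vD lsD" "endv vD lsD = j"
  shows "is_string K n T vT (lsT @ [((i, j, DK, 1), True)] @ inv_letters lsD)"
proof (rule is_string_append_arrow_inverse)
  show "is_string K n T vT lsT" "is_string K n T vD lsD"
    using sT(1) sD(1) unfolding is_sigma_def by auto
  show "is_arrow K n T (i, j, DK, 1)" using is_arrow_beta[OF X i j] .
  show "asrc (i, j, DK, 1) = endv vT lsT" "atgt (i, j, DK, 1) = endv vD lsD"
    using sT(2) sD(2) by (simp_all add: asrc_def atgt_def)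
  show "\<forall>x\<in>set lsT \<union> set lsD. fst x \<noteq> (i, j, DK, 1)"
    using RT_sigma_letter[OF X sT(1)] RD_sigma_letter[OF sD(1)] by (force simp: akind_def)
next
  fix p w1 w2 s
  assume w1: "lsT = p @ w1" "\<forall>x\<in>set w1. snd x" and w2: "inv_letters lsD = w2 @ s" "\<forall>x\<in>set w2. snd x"
  have strings: "is_string K n T vT lsT" "is_string K n T vD lsD"
    using sT(1) sD(1) unfolding is_sigma_def by auto
  note p = direct_suffix_path[OF strings(1) w1] and q = direct_prefix_inv_path[OF strings(2) w2]
  have "pathmor K n T (map fst w1 @ (i, j, DK, 1) # map fst w2) = eD 1"
  proof (rule pathmor_through_beta[OF X i j])
    show "\<forall>\<alpha>\<in>set (map fst w1). is_arrow K n T \<alpha> \<and> akind \<alpha> = TK \<and> T (asrc \<alpha>) \<in> RT n X"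
      using RT_sigma_letter[OF X sT(1)] w1(1) by auto
    show "\<forall>\<alpha>\<in>set (map fst w2). is_arrow K n T \<alpha> \<and> akind \<alpha> = TK \<and> T (atgt \<alpha>) \<in> RD n X"
      using RD_sigma_letter[OF sD(1)] q(3) by auto
  qed (use p q sT(2) sD(2) in auto)
  then show "\<not> zero_rel K n T (map fst w1 @ (i, j, DK, 1) # map fst w2)"
    unfolding zero_rel_def using eD_neq_zmor by auto
qed
end

theorem lemma4p7:
  fixes K :: "'k::alg_closed_field itself"
    and n :: nat and T :: "nat \<Rightarrow> obj" and X :: obj
  assumes "n \<ge> 2"
    and "inj_on T {1..n-1}"
    and "max_rigid n (T ` {1..n-1})"
    and "T 1 = (1, int n - 1)"
    and "X \<in> Fset n"
    and "RT n X \<inter> T ` {1..n-1} \<noteq> {}"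
    and "RD n X \<inter> T ` {1..n-1} \<noteq> {}"
  shows "\<forall>i j. is_top n T (RT n X) i \<and> is_top n T (RD n X) j \<longrightarrow>
           (\<exists>x. is_arrow K n T (i, j, DK, x) \<and>
              (\<forall>vT lsT vD lsD.
                 is_sigma K n T (RT n X) vT lsT \<and> endv vT lsT = i \<and>
                 is_sigma K n T (RD n X) vD lsD \<and> endv vD lsD = j \<longrightarrow>
                 is_string K n T vT (lsT @ [((i, j, DK, x), True)] @ inv_letters lsD)))"
proof -
  interpret max_rigid_tube n T
    using assms(1-4) by unfold_locales
  have X: "valid n X" using assms(5) unfolding Fset_def by auto
  show ?thesis
    using is_arrow_beta[OF X] sigma_beta_sigma_is_string[OF X] by blast
qed
end
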